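(* Every connected simplicial $2$-manifold (possibly with boundary) has a facet cycle, unless it is a checkered polygon triangulation.
   Context: A simplicial $2$-manifold is a finite $2$-dimensional simplicial complex homeomorphic to a $2$-manifold, possibly with boundary; its triangles are called facets. The incidence graph is the bipartite graph whose nodes are the facets and vertices, with an arc $(v,f)$ whenever $v$ is a vertex of $f$. A facet cycle is a closed trail $(v_0,f_1,v_1,\dots,f_k,v_k)$, $v_k=v_0$, in the incidence graph (no arc repeated) that contains every facet node exactly once (vertex nodes may repeat). A polygon triangulation is a simplicial complex homeomorphic to a closed disk with all vertices on the boundary; it is checkered if its triangles can be colored black and white so that triangles sharing an edge receive different colors and every white triangle shares an edge with exactly three triangles (a single triangle is checkered). *)

theory Defs
  imports Main
begin

text \<open>A finite pure 2-dimensional simplicial complex is represented by its set of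
facets F (triangles = 3-element vertex sets); all faces are subsets of facets.\<close>

definition vertices :: "'v set set \<Rightarrow> 'v set" where
  "vertices F = \<Union>F"

definition edges :: "'v set set \<Rightarrow> 'v set set" where
  "edges F = {e. card e = 2 \<and> (\<exists>f\<in>F. e \<subseteq> f)}"

definition link_rel :: "'v set set \<Rightarrow> 'v \<Rightarrow> ('v \<times> 'v) set" where
  "link_rel F v = {(a, b). {v, a, b} \<in> F \<and> a \<noteq> b \<and> a \<noteq> v \<and> b \<noteq> v}"

definition link_vertices :: "'v set set \<Rightarrow> 'v \<Rightarrow> 'v set" where
  "link_vertices F v = {a. a \<noteq> v \<and> (\<exists>f\<in>F. v \<in> f \<and> a \<in> f)}"

text \<open>Combinatorial 2-manifold (possibly with boundary): finitely many triangles,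
every edge in at most two triangles, every vertex link connected (hence a path or a cycle).\<close>
definition simplicial_2_manifold :: "'v set set \<Rightarrow> bool" where
  "simplicial_2_manifold F \<longleftrightarrow>
     finite F \<and> F \<noteq> {} \<and> (\<forall>f\<in>F. card f = 3) \<and>
     (\<forall>e\<in>edges F. card {f\<in>F. e \<subseteq> f} \<le> 2) \<and>
     (\<forall>v\<in>vertices F. \<forall>a\<in>link_vertices F v. \<forall>b\<in>link_vertices F v.
         (a, b) \<in> (link_rel F v)\<^sup>*)"

definition connected_complex :: "'v set set \<Rightarrow> bool" where
  "connected_complex F \<longleftrightarrow>
     (\<forall>f\<in>F. \<forall>g\<in>F. (f, g) \<in> {(f, g). f \<in> F \<and> g \<in> F \<and> f \<inter> g \<noteq> {}}\<^sup>*)"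

text \<open>Facet cycle: closed trail v_0 f_1 v_1 ... f_k v_k = v_0 in the incidence graph,
every facet exactly once, no arc repeated (here fs!i = f_(i+1), vs!i = v_i).\<close>
definition has_facet_cycle :: "'v set set \<Rightarrow> bool" where
  "has_facet_cycle F \<longleftrightarrow>
     (\<exists>fs vs. distinct fs \<and> set fs = F \<and> length vs = Suc (length fs) \<and>
        vs ! 0 = vs ! length fs \<and>
        (\<forall>i<length fs. vs ! i \<in> fs ! i \<and> vs ! Suc i \<in> fs ! i \<and> vs ! i \<noteq> vs ! Suc i))"

definition boundary_edge :: "'v set set \<Rightarrow> 'v set \<Rightarrow> bool" where
  "boundary_edge F e \<longleftrightarrow> e \<in> edges F \<and> card {f\<in>F. e \<subseteq> f} = 1"

text \<open>Polygon triangulation: a combinatorial 2-manifold homeomorphic to a closed disk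
(connected, Euler characteristic 1, nonempty boundary) with all vertices on the boundary.\<close>
definition polygon_triangulation :: "'v set set \<Rightarrow> bool" where
  "polygon_triangulation F \<longleftrightarrow>
     simplicial_2_manifold F \<and> connected_complex F \<and>
     int (card (vertices F)) - int (card (edges F)) + int (card F) = 1 \<and>
     (\<forall>v\<in>vertices F. \<exists>e. boundary_edge F e \<and> v \<in> e)"

definition adjacent_facets :: "'v set set \<Rightarrow> 'v set \<Rightarrow> 'v set \<Rightarrow> bool" where
  "adjacent_facets F f g \<longleftrightarrow> f \<in> F \<and> g \<in> F \<and> f \<noteq> g \<and> card (f \<inter> g) = 2"

definition checkered :: "'v set set \<Rightarrow> bool" where
  "checkered F \<longleftrightarrow>
     (\<exists>black :: 'v set \<Rightarrow> bool.
        (\<forall>f g. adjacent_facets F f g \<longrightarrow> black f \<noteq> black g) \<and>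
        (\<forall>f\<in>F. \<not> black f \<longrightarrow> card {g. adjacent_facets F f g} = 3))"

end

(*
  Two facets are adjacent if they share an edge. In a connected simplicial 2-manifold this dual
  graph is connected and every facet has at most three neighbours. A connected graph of maximum
  degree three can be partitioned into paths with two or three vertices unless it is a checkered
  tree, i.e. a tree coloured black and white so that adjacent vertices differ and every white
  vertex has degree three: prune a spanning tree from a deepest vertex with children, and if the
  spanning tree is checkered, an edge of the graph outside the tree joins two black vertices and
  repairs the partition. The facets of a path carry a closed trail of the incidence graph, and
  closed trails of two adjacent blocks splice along the common edge, which yields a facet cycle.
  If the dual graph is a checkered tree, double counting gives |E| = 2|F| + 1 and |V| = |F| + 2,
  with every vertex on the boundary, so the complex is a checkered polygon triangulation.
*)

theory Submission
  imports Defs "HOL-Library.Disjoint_Sets"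
begin

section \<open>Graphs and block partitions\<close>

definition nbrs :: "('a \<Rightarrow> 'a \<Rightarrow> bool) \<Rightarrow> 'a set \<Rightarrow> 'a \<Rightarrow> 'a set" where
  "nbrs adj X x = {y \<in> X. adj x y}"

definition checkered_graph :: "('a \<Rightarrow> 'a \<Rightarrow> bool) \<Rightarrow> 'a set \<Rightarrow> ('a \<Rightarrow> bool) \<Rightarrow> bool" where
  "checkered_graph adj X black \<longleftrightarrow>
     (\<forall>x\<in>X. \<forall>y\<in>X. adj x y \<longrightarrow> black x \<noteq> black y) \<and>
     (\<forall>x\<in>X. \<not> black x \<longrightarrow> card (nbrs adj X x) = 3)"

definition short_path :: "('a \<Rightarrow> 'a \<Rightarrow> bool) \<Rightarrow> 'a set \<Rightarrow> bool" where
  "short_path adj B \<longleftrightarrow>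
     (\<exists>a b. B = {a, b} \<and> a \<noteq> b \<and> adj a b) \<or>
     (\<exists>a b c. B = {a, b, c} \<and> distinct [a, b, c] \<and> adj b a \<and> adj b c)"

definition white_centred_path :: "('a \<Rightarrow> 'a \<Rightarrow> bool) \<Rightarrow> ('a \<Rightarrow> bool) \<Rightarrow> 'a set \<Rightarrow> bool" where
  "white_centred_path adj black B \<longleftrightarrow>
     (\<exists>a b c. B = {a, b, c} \<and> distinct [a, b, c] \<and> adj b a \<and> adj b c \<and> \<not> black b)"

definition block_partition :: "('a set \<Rightarrow> bool) \<Rightarrow> 'a set \<Rightarrow> bool" where
  "block_partition Q X \<longleftrightarrow> (\<exists>P. partition_on X P \<and> (\<forall>B\<in>P. Q B))"

lemma nbrs_Diff: "nbrs adj (X - S) x = nbrs adj X x - S"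
  unfolding nbrs_def by blast

lemma finite_nbrs: "finite X \<Longrightarrow> finite (nbrs adj X x)"
  unfolding nbrs_def by simp

lemma card_nbrs_Diff_le: "finite X \<Longrightarrow> card (nbrs adj (X - S) x) \<le> card (nbrs adj X x)"
  unfolding nbrs_Diff by (intro card_mono finite_nbrs) auto

lemma short_path_edge: "a \<noteq> b \<Longrightarrow> adj a b \<Longrightarrow> short_path adj {a, b}"
  unfolding short_path_def by blast

lemma short_path_if_white_centred_path:
  "white_centred_path adj black B \<Longrightarrow> short_path adj B"
  unfolding white_centred_path_def short_path_def by blast

lemma short_path_mono:
  "short_path adj B \<Longrightarrow> (\<And>a b. a \<in> B \<Longrightarrow> b \<in> B \<Longrightarrow> adj a b \<Longrightarrow> adj' a b) \<Longrightarrow> short_path adj' B"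
  unfolding short_path_def by (elim disjE exE conjE) blast+

lemma block_partition_empty: "block_partition Q {}"
  unfolding block_partition_def by (auto simp: partition_on_empty)

lemma block_partition_insert:
  assumes "block_partition Q X" "Q B" "B \<inter> X = {}"
  shows "block_partition Q (B \<union> X)"
proof (cases "B = {}")
  case False
  obtain P where P: "partition_on X P" "\<forall>B\<in>P. Q B"
    using assms(1) unfolding block_partition_def by blast
  have "partition_on (B \<union> X) (insert B P)"
    using P(1) assms(3) False
    by (subst partition_on_insert) (auto simp: partition_on_def disjnt_def)
  then show ?thesis
    using P(2) assms(2) unfolding block_partition_def by blast
qed (use assms(1) in simp)

lemma block_partition_single: "Q B \<Longrightarrow> block_partition Q B"
  using block_partition_insert[OF block_partition_empty, of Q B] by simp


lemma block_partition_mono: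
  assumes "block_partition Q X" "\<And>B. B \<subseteq> X \<Longrightarrow> Q B \<Longrightarrow> Q' B"
  shows "block_partition Q' X"
  using assms unfolding block_partition_def partition_on_def by blast

lemma block_partition_remove_block:
  assumes "block_partition Q X" "y \<in> X"
  obtains B where "y \<in> B" "B \<subseteq> X" "Q B" "block_partition Q (X - B)"
proof -
  obtain P where P: "partition_on X P" "\<forall>B\<in>P. Q B"
    using assms(1) unfolding block_partition_def by blast
  then obtain B where B: "B \<in> P" "y \<in> B"
    using assms(2) by (auto simp: partition_on_def)
  have "partition_on X (insert B (P - {B}))"
    using P(1) B(1) by (simp add: insert_absorb)
  moreover have "disjnt B (\<Union>(P - {B}))"
    using P(1) B(1) by (auto simp: partition_on_def disjnt_def disjoint_def)
  ultimately have "partition_on (X - B) (P - {B})" "B \<subseteq> X"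
    using partition_on_insert[of B "P - {B}" X] by blast+
  then show ?thesis
    using that B P(2) unfolding block_partition_def by blast
qed

lemma rtrancl_leaves_set:
  assumes "(x, y) \<in> R\<^sup>*" "x \<in> Y" "y \<notin> Y"
  obtains a b where "a \<in> Y" "b \<notin> Y" "(a, b) \<in> R"
proof -
  have "y \<in> Y \<or> (\<exists>a b. a \<in> Y \<and> b \<notin> Y \<and> (a, b) \<in> R)"
    using assms(1) by induction (use assms(2) in blast)+
  then show ?thesis
    using assms(3) that by blast
qed

lemma block_partition_merge:
  assumes "block_partition Q A" "finite A" "A \<noteq> {}"
    and conn: "\<forall>x\<in>A. \<forall>y\<in>A. (x, y) \<in> {(a, b). R a b}\<^sup>*" and closed: "\<And>a b. R a b \<Longrightarrow> b \<in> A"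
    and merge: "\<And>S T a b. Q S \<Longrightarrow> Q T \<Longrightarrow> S \<inter> T = {} \<Longrightarrow> a \<in> S \<Longrightarrow> b \<in> T \<Longrightarrow> R a b \<Longrightarrow> Q (S \<union> T)"
  shows "Q A"
proof -
  have "Q A" if "S \<subseteq> A" "S \<noteq> {}" "Q S" "block_partition Q (A - S)" for S
    using that
  proof (induction "card (A - S)" arbitrary: S rule: less_induct)
    case less
    show ?case
    proof (cases "S = A")
      case True
      then show ?thesis
        using less.prems(3) by simp
    next
      case False
      then obtain x y where "x \<in> S" "y \<in> A" "y \<notin> S"
        using less.prems(1,2) by blast
      moreover have "(x, y) \<in> {(a, b). R a b}\<^sup>*"
        using conn less.prems(1) \<open>x \<in> S\<close> \<open>y \<in> A\<close> by blast
      ultimately obtain a b where ab: "a \<in> S" "b \<notin> S" "R a b"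
        using rtrancl_leaves_set[of x y "{(a, b). R a b}" S] by blast
      then have "b \<in> A - S"
        using closed by blast
      with less.prems(4) obtain B where B: "b \<in> B" "B \<subseteq> A - S" "Q B" "block_partition Q (A - S - B)"
        by (rule block_partition_remove_block)
      have "Q (S \<union> B)"
        using merge[OF less.prems(3) B(3)] B(1,2) ab by blast
      moreover have "card (A - (S \<union> B)) < card (A - S)"
        using B(1,2) assms(2) by (intro psubset_card_mono) auto
      moreover have "A - (S \<union> B) = A - S - B"
        by blast
      ultimately show ?thesis
        using less.hyps[of "S \<union> B"] less.prems(1,2) B(2,4) by auto
    qed
  qed
  moreover obtain x where "x \<in> A"
    using assms(3) by blast
  with assms(1) obtain B where "x \<in> B" "B \<subseteq> A" "Q B" "block_partition Q (A - B)"
    by (rule block_partition_remove_block)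
  ultimately show ?thesis
    by blast
qed

lemma short_path_nbr: "a \<in> nbrs adj X b \<Longrightarrow> \<not> adj b b \<Longrightarrow> short_path adj {b, a}"
  unfolding nbrs_def short_path_def by blast

lemma short_path_nbrs:
  "a \<in> nbrs adj X b \<Longrightarrow> c \<in> nbrs adj X b \<Longrightarrow> a \<noteq> c \<Longrightarrow> \<not> adj b b \<Longrightarrow>
     short_path adj {a, b, c}"
  unfolding nbrs_def short_path_def by (intro disjI2 exI[of _ a] exI[of _ b] exI[of _ c]) auto

lemma white_centred_path_nbrs:
  "a \<in> nbrs adj X b \<Longrightarrow> c \<in> nbrs adj X b \<Longrightarrow> a \<noteq> c \<Longrightarrow> \<not> adj b b \<Longrightarrow> \<not> black b \<Longrightarrow>
     white_centred_path adj black {a, b, c}"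
  unfolding nbrs_def white_centred_path_def by (intro exI[of _ a] exI[of _ b] exI[of _ c]) auto

lemma checkered_graph_Diff:
  assumes "checkered_graph adj X black"
    and "\<forall>x\<in>X - S. \<not> black x \<longrightarrow> nbrs adj (X - S) x = nbrs adj X x"
  shows "checkered_graph adj (X - S) black"
  using assms unfolding checkered_graph_def by auto

lemma checkered_graph_black_if_nbr_removed:
  assumes "finite X" "card (nbrs adj X q) \<le> 3" "X' \<subseteq> X" "p \<in> X - X'" "q \<in> X'" "adj q p"
    and "checkered_graph adj X' black"
  shows "black q"
proof (rule ccontr)
  assume "\<not> black q"
  then have "card (nbrs adj X' q) = 3"
    using assms(5,7) unfolding checkered_graph_def by blast
  moreover have "insert p (nbrs adj X' q) \<subseteq> nbrs adj X q" "p \<notin> nbrs adj X' q"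
    using assms(3,4,6) unfolding nbrs_def by auto
  then have "card (insert p (nbrs adj X' q)) \<le> card (nbrs adj X q)"
    by (intro card_mono finite_nbrs assms(1))
  ultimately show False
    using assms(1,2,3) finite_subset[OF assms(3)] finite_nbrs \<open>p \<notin> nbrs adj X' q\<close> by fastforce
qed

section \<open>Rooted trees\<close>

text \<open>The height \<open>h\<close> decreases towards the root \<open>r\<close>, so following \<open>par\<close> always reaches \<open>r\<close>.\<close>

definition rooted_tree :: "'a set \<Rightarrow> 'a \<Rightarrow> ('a \<Rightarrow> 'a) \<Rightarrow> ('a \<Rightarrow> nat) \<Rightarrow> bool" where
  "rooted_tree X r par h \<longleftrightarrow>
     finite X \<and> r \<in> X \<and> (\<forall>x\<in>X - {r}. par x \<in> X \<and> h (par x) < h x \<and> h r < h x)"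

definition tree_adj :: "'a \<Rightarrow> ('a \<Rightarrow> 'a) \<Rightarrow> 'a \<Rightarrow> 'a \<Rightarrow> bool" where
  "tree_adj r par x y \<longleftrightarrow> (x \<noteq> r \<and> par x = y) \<or> (y \<noteq> r \<and> par y = x)"

definition children :: "'a set \<Rightarrow> 'a \<Rightarrow> ('a \<Rightarrow> 'a) \<Rightarrow> 'a \<Rightarrow> 'a set" where
  "children X r par p = {x \<in> X - {r}. par x = p}"

lemma rooted_tree_finite: "rooted_tree X r par h \<Longrightarrow> finite X"
  unfolding rooted_tree_def by blast

lemma rooted_tree_root: "rooted_tree X r par h \<Longrightarrow> r \<in> X"
  unfolding rooted_tree_def by blast

lemma rooted_treeD:
  assumes "rooted_tree X r par h" "x \<in> X" "x \<noteq> r"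
  shows "par x \<in> X" "h (par x) < h x" "h r < h x"
  using assms unfolding rooted_tree_def by auto

lemma rooted_tree_singleton: "rooted_tree {r} r par h"
  unfolding rooted_tree_def by simp

lemma rooted_tree_insert_leaf:
  assumes T: "rooted_tree Y r par h" and "a \<in> Y" "b \<notin> Y"
  shows "rooted_tree (insert b Y) r (par(b := a)) (h(b := Suc (Max (h ` Y))))"
proof -
  have "h y \<le> Max (h ` Y)" if "y \<in> Y" for y
    using that rooted_tree_finite[OF T] by simp
  then show ?thesis
    using assms rooted_treeD[OF T] rooted_tree_root[OF T] rooted_tree_finite[OF T]
    unfolding rooted_tree_def by (auto simp: le_imp_less_Suc)
qed

lemma tree_adj_sym: "tree_adj r par x y \<longleftrightarrow> tree_adj r par y x"
  unfolding tree_adj_def by blast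

lemma tree_adj_par: "x \<noteq> r \<Longrightarrow> tree_adj r par x (par x)"
  unfolding tree_adj_def by blast

lemma tree_adj_irrefl: "rooted_tree X r par h \<Longrightarrow> x \<in> X \<Longrightarrow> \<not> tree_adj r par x x"
  unfolding tree_adj_def using rooted_treeD(2) by fastforce

lemma par_notin_children:
  assumes "rooted_tree X r par h" "x \<in> X" "x \<noteq> r"
  shows "par x \<notin> children X r par x"
  using rooted_treeD(2)[OF assms] rooted_treeD(2)[OF assms(1)]
  unfolding children_def by fastforce

lemma finite_children: "rooted_tree X r par h \<Longrightarrow> finite (children X r par p)"
  unfolding children_def using rooted_tree_finite by fastforce

lemma nbrs_tree_adj:
  assumes "rooted_tree X r par h" "x \<in> X"
  shows "nbrs (tree_adj r par) X x = children X r par x \<union> (if x = r then {} else {par x})"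
  using assms rooted_treeD(1)[OF assms(1)]
  unfolding nbrs_def children_def tree_adj_def by auto

lemma card_nbrs_tree_adj:
  assumes "rooted_tree X r par h" "x \<in> X"
  shows "card (nbrs (tree_adj r par) X x) = card (children X r par x) + (if x = r then 0 else 1)"
  using nbrs_tree_adj[OF assms] par_notin_children[OF assms] finite_children[OF assms(1)]
  by simp

lemma nbrs_tree_adj_leaf:
  assumes "rooted_tree X r par h" "x \<in> X" "x \<noteq> r" "children X r par x = {}"
  shows "nbrs (tree_adj r par) X x = {par x}"
  using nbrs_tree_adj[OF assms(1,2)] assms(3,4) by simp

lemma finite_ex_max_on:
  fixes h :: "'a \<Rightarrow> nat"
  assumes "finite S" "S \<noteq> {}"
  obtains p where "p \<in> S" "\<forall>q\<in>S. h q \<le> h p"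
proof -
  have "Max (h ` S) \<in> h ` S"
    using assms by simp
  then obtain p where "p \<in> S" "h p = Max (h ` S)"
    by (metis imageE)
  moreover have "\<forall>q\<in>S. h q \<le> Max (h ` S)"
    using assms(1) by simp
  ultimately show ?thesis
    using that by simp
qed

text \<open>Take a deepest vertex with children; all its children are leaves.\<close>

lemma rooted_tree_leaf_parent:
  assumes T: "rooted_tree X r par h" and "X \<noteq> {r}"
  obtains p where "p \<in> X" "children X r par p \<noteq> {}"
    "\<forall>c\<in>children X r par p. children X r par c = {}"
    "p = r \<longrightarrow> X = insert r (children X r par r)"
proof -
  let ?parents = "{p\<in>X. children X r par p \<noteq> {}}"
  have child_of_par: "x \<in> children X r par (par x)" "par x \<in> ?parents" if "x \<in> X" "x \<noteq> r" for x
    using that rooted_treeD(1)[OF T] unfolding children_def by auto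
  then have "?parents \<noteq> {}"
    using assms rooted_tree_root[OF T] by blast
  then obtain p where p: "p \<in> ?parents" "\<forall>q\<in>?parents. h q \<le> h p"
    using finite_ex_max_on[of ?parents h] rooted_tree_finite[OF T] by auto
  have leaves: "\<forall>c\<in>children X r par p. children X r par c = {}"
  proof (intro ballI equals0I)
    fix c c' assume c: "c \<in> children X r par p" and "c' \<in> children X r par c"
    then have "c \<in> ?parents"
      unfolding children_def by auto
    then have "h c \<le> h p"
      using p(2) by blast
    moreover have "h p < h c"
      using c rooted_treeD(2)[OF T] unfolding children_def by auto
    ultimately show False
      by simp
  qed
  have star: "p = r \<longrightarrow> X = insert r (children X r par r)"
  proof
    assume "p = r"
    have "par x = r" if "x \<in> X" "x \<noteq> r" for x
    proof (rule ccontr)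
      assume "par x \<noteq> r"
      then have "h r < h (par x)"
        using rooted_treeD(1,3)[OF T] that by blast
      moreover have "h (par x) \<le> h r"
        using p(2) child_of_par(2)[OF that] \<open>p = r\<close> by blast
      ultimately show False
        by simp
    qed
    then show "X = insert r (children X r par r)"
      using rooted_tree_root[OF T] unfolding children_def by auto
  qed
  from p(1) have "p \<in> X" "children X r par p \<noteq> {}"
    by simp_all
  then show ?thesis
    using leaves star by (rule that)
qed

lemma rooted_tree_prune:
  assumes T: "rooted_tree X r par h" and p: "p \<in> X" "p \<noteq> r"
    and leaves: "\<forall>c\<in>children X r par p. children X r par c = {}"
  defines "X' \<equiv> X - insert p (children X r par p)"
  shows "rooted_tree X' r par h" "par p \<in> X'" "card X' < card X"
    and "\<And>x. x \<in> X' \<Longrightarrow> x \<noteq> par p \<Longrightarrow> nbrs (tree_adj r par) X' x = nbrs (tree_adj r par) X x"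
proof -
  let ?C = "children X r par p"
  have child: "x \<in> children X r par (par x)" if "x \<in> X" "x \<noteq> r" for x
    using that unfolding children_def by blast
  have par_X': "par x \<in> X'" if "x \<in> X'" "x \<noteq> r" for x
  proof -
    have "par x \<noteq> p" "x \<in> X"
      using that unfolding X'_def children_def by auto
    moreover have "par x \<notin> ?C"
      using leaves child[OF \<open>x \<in> X\<close> \<open>x \<noteq> r\<close>] by blast
    ultimately show ?thesis
      using rooted_treeD(1)[OF T] that unfolding X'_def by blast
  qed
  have "r \<in> X'"
    using p(2) rooted_tree_root[OF T] unfolding X'_def children_def by blast
  then show "rooted_tree X' r par h"
    using T par_X' unfolding rooted_tree_def X'_def by auto
  have "par p \<noteq> p"
    using rooted_treeD(2)[OF T p] by auto
  moreover have "par p \<notin> ?C"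
    using leaves child[OF p] by blast
  ultimately show "par p \<in> X'"
    using rooted_treeD(1)[OF T p] unfolding X'_def by blast
  show "card X' < card X"
    using p(1) rooted_tree_finite[OF T] unfolding X'_def by (intro psubset_card_mono) auto
  fix x assume x: "x \<in> X'" "x \<noteq> par p"
  have "nbrs (tree_adj r par) X x \<inter> insert p ?C = {}"
  proof (intro equals0I)
    fix y assume y: "y \<in> nbrs (tree_adj r par) X x \<inter> insert p ?C"
    then have "tree_adj r par x y" "x \<in> X" "x \<notin> insert p ?C"
      using x unfolding nbrs_def X'_def by auto
    then show False
      using y x(2) leaves unfolding tree_adj_def children_def by auto
  qed
  then show "nbrs (tree_adj r par) X' x = nbrs (tree_adj r par) X x"
    unfolding X'_def nbrs_Diff by blast
qed

lemma spanning_rooted_tree: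
  assumes X: "finite X" "r \<in> X" and R: "R \<subseteq> X \<times> X" "\<forall>x\<in>X. (r, x) \<in> R\<^sup>*"
  obtains par h where "rooted_tree X r par h" "\<forall>x\<in>X - {r}. (par x, x) \<in> R"
proof -
  have "\<exists>par h. rooted_tree X r par h \<and> (\<forall>x\<in>X - {r}. (par x, x) \<in> R)"
    if "Y \<subseteq> X" "rooted_tree Y r par h" "\<forall>x\<in>Y - {r}. (par x, x) \<in> R" for Y par h
    using that
  proof (induction "card (X - Y)" arbitrary: Y par h rule: less_induct)
    case less
    show ?case
    proof (cases "Y = X")
      case True
      then show ?thesis
        using less.prems by blast
    next
      case False
      then obtain x where "x \<in> X" "x \<notin> Y"
        using less.prems(1) by blast
      then obtain a b where ab: "a \<in> Y" "b \<notin> Y" "(a, b) \<in> R"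
        using rtrancl_leaves_set[OF _ rooted_tree_root[OF less.prems(2)]] R(2) by metis
      have "b \<in> X"
        using ab(3) R(1) by blast
      then have "card (X - insert b Y) < card (X - Y)"
        using X(1) ab(2) by (intro psubset_card_mono) auto
      moreover have "\<forall>x\<in>insert b Y - {r}. ((par(b := a)) x, x) \<in> R"
        using less.prems(3) ab by auto
      ultimately show ?thesis
        using less.hyps rooted_tree_insert_leaf[OF less.prems(2) ab(1,2)] less.prems(1) \<open>b \<in> X\<close>
        by blast
    qed
  qed
  then show ?thesis
    using that rooted_tree_singleton[of r] X(2) by blast
qed

section \<open>Graphs of maximum degree three\<close>

lemma checkered_tree_leaf_parent:
  assumes T: "rooted_tree X r par h" and chk: "checkered_graph (tree_adj r par) X black"
    and p: "p \<in> X" "c \<in> children X r par p" "children X r par c = {}"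
  shows "black c" "\<not> black p" "card (nbrs (tree_adj r par) X p) = 3"
proof -
  have c: "c \<in> X" "c \<noteq> r" "par c = p"
    using p(2) unfolding children_def by auto
  have "card (nbrs (tree_adj r par) X c) = 1"
    using nbrs_tree_adj_leaf[OF T c(1,2) p(3)] by simp
  then show "black c"
    using chk c(1) unfolding checkered_graph_def by fastforce
  moreover have "tree_adj r par c p"
    using c unfolding tree_adj_def by blast
  ultimately show "\<not> black p"
    using chk c(1) p(1) unfolding checkered_graph_def by blast
  then show "card (nbrs (tree_adj r par) X p) = 3"
    using chk p(1) unfolding checkered_graph_def by blast
qed

lemma checkered_tree_prune:
  assumes T: "rooted_tree X r par h" and chk: "checkered_graph (tree_adj r par) X black"
    and p: "p \<in> X" "p \<noteq> r" "children X r par p \<noteq> {}"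
    and leaves: "\<forall>c\<in>children X r par p. children X r par c = {}"
  shows "card (children X r par p) = 2" "\<not> black p" "black (par p)"
    and "checkered_graph (tree_adj r par) (X - insert p (children X r par p)) black"
proof -
  let ?adj = "tree_adj r par"
  obtain c where "c \<in> children X r par p"
    using p(3) by blast
  then show white: "\<not> black p" and "card (children X r par p) = 2"
    using checkered_tree_leaf_parent[OF T chk p(1)] card_nbrs_tree_adj[OF T p(1)] leaves p(2)
    by auto
  have "par p \<in> nbrs ?adj X p"
    using nbrs_tree_adj[OF T p(1)] p(2) by simp
  then show "black (par p)"
    using chk p(1) white unfolding checkered_graph_def nbrs_def by blast
  then show "checkered_graph ?adj (X - insert p (children X r par p)) black"
    using checkered_graph_Diff[OF chk] rooted_tree_prune(4)[OF T p(1,2) leaves] by blast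
qed

lemma checkered_star_minus_black:
  assumes T: "rooted_tree X r par h" and chk: "checkered_graph (tree_adj r par) X black"
    and star: "X = insert r (children X r par r)" "children X r par r \<noteq> {}"
    and leaves: "\<forall>c\<in>children X r par r. children X r par c = {}"
    and u: "u \<in> X" "black u"
  shows "block_partition (white_centred_path (tree_adj r par) black) (X - {u})"
proof -
  let ?adj = "tree_adj r par" and ?C = "children X r par r"
  obtain c where "c \<in> ?C"
    using star(2) by blast
  then have white: "\<not> black r" and "card (nbrs ?adj X r) = 3"
    using checkered_tree_leaf_parent[OF T chk rooted_tree_root[OF T]] leaves by auto
  moreover have nbrs_r: "nbrs ?adj X r = ?C"
    using nbrs_tree_adj[OF T rooted_tree_root[OF T]] by simp
  moreover have "u \<in> ?C"
    using star(1) u white by auto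
  ultimately have "card (?C - {u}) = 2"
    by simp
  then obtain c1 c2 where c12: "?C - {u} = {c1, c2}" "c1 \<noteq> c2"
    by (meson card_2_iff)
  then have "white_centred_path ?adj black {c1, r, c2}"
    using nbrs_r white tree_adj_irrefl[OF T rooted_tree_root[OF T]]
    by (intro white_centred_path_nbrs[where X = X]) auto
  moreover have "X - {u} = {c1, r, c2}"
    using star(1) c12 u white by auto
  ultimately show ?thesis
    by (simp add: block_partition_single)
qed

lemma checkered_tree_minus_black:
  assumes "rooted_tree X r par h" "checkered_graph (tree_adj r par) X black" "u \<in> X" "black u"
  shows "block_partition (white_centred_path (tree_adj r par) black) (X - {u})"
  using assms
proof (induction "card X" arbitrary: X u rule: less_induct)
  case less
  note T = less.prems(1) and chk = less.prems(2)
  let ?adj = "tree_adj r par" and ?Q = "white_centred_path (tree_adj r par) black"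
  show ?case
  proof (cases "X = {r}")
    case True
    then show ?thesis
      using less.prems(3) block_partition_empty by (metis Diff_cancel singletonD)
  next
    case False
    obtain p where p: "p \<in> X" "children X r par p \<noteq> {}"
      "\<forall>c\<in>children X r par p. children X r par c = {}" "p = r \<longrightarrow> X = insert r (children X r par r)"
      by (rule rooted_tree_leaf_parent[OF T False])
    show ?thesis
    proof (cases "p = r")
      case True
      then show ?thesis
        using checkered_star_minus_black[OF T chk] p less.prems(3,4) by blast
    next
      case False
      define C where "C = children X r par p"
      define q where "q = par p"
      define X' where "X' = X - insert p C"
      note prune = rooted_tree_prune[OF T p(1) False p(3), folded C_def, folded X'_def q_def]
      note chk_prune =
        checkered_tree_prune[OF T chk p(1) False p(2,3), folded C_def, folded X'_def q_def]
      have IH: "block_partition ?Q (X' - {v})" if "v \<in> X'" "black v" for v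
        using less.hyps[OF prune(3) prune(1) chk_prune(4) that] .
      have path: "?Q {c, p, c'}" if "c \<in> insert q C" "c' \<in> insert q C" "c \<noteq> c'" for c c'
        using that nbrs_tree_adj[OF T p(1)] False chk_prune(2) tree_adj_irrefl[OF T p(1)]
        unfolding C_def q_def by (intro white_centred_path_nbrs[where X = X]) auto
      have "C \<subseteq> X" "q \<notin> C"
        using prune(2) unfolding C_def X'_def children_def by auto
      obtain c1 c2 where c12: "C = {c1, c2}" "c1 \<noteq> c2"
        using chk_prune(1) by (meson card_2_iff)
      show ?thesis
      proof (cases "u \<in> X'")
        case True
        have "?Q {c1, p, c2}"
          by (rule path) (use c12 in auto)
        moreover have "{c1, p, c2} \<inter> (X' - {u}) = {}"
          using c12 unfolding X'_def by auto
        ultimately have "block_partition ?Q ({c1, p, c2} \<union> (X' - {u}))"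
          by (rule block_partition_insert[OF IH[OF True less.prems(4)]])
        moreover have "X - {u} = {c1, p, c2} \<union> (X' - {u})"
          using True p(1) c12 \<open>C \<subseteq> X\<close> unfolding X'_def by auto
        ultimately show ?thesis
          by simp
      next
        case False
        then have "u \<in> C"
          using less.prems(3,4) chk_prune(2) unfolding X'_def by auto
        then obtain c where c: "C - {u} = {c}" "c \<in> C"
          using c12 by auto
        have "?Q {c, p, q}"
          by (rule path) (use c \<open>q \<notin> C\<close> in auto)
        moreover have "{c, p, q} \<inter> (X' - {q}) = {}"
          using c unfolding X'_def by auto
        ultimately have "block_partition ?Q ({c, p, q} \<union> (X' - {q}))"
          by (rule block_partition_insert[OF IH[OF prune(2) chk_prune(3)]])
        moreover have "X - {u} = {c, p, q} \<union> (X' - {q})"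
          using c \<open>u \<in> C\<close> p(1) prune(2) \<open>C \<subseteq> X\<close> chk_prune(2) less.prems(4) unfolding X'_def by auto
        ultimately show ?thesis
          by simp
      qed
    qed
  qed
qed

lemma children_one_or_two:
  assumes T: "rooted_tree X r par h" and p: "p \<in> X" "p \<noteq> r" "children X r par p \<noteq> {}"
    and deg: "card (nbrs (tree_adj r par) X p) \<le> 3"
  obtains (one) c where "children X r par p = {c}"
    | (two) c1 c2 where "children X r par p = {c1, c2}" "c1 \<noteq> c2"
proof -
  have "card (children X r par p) \<noteq> 0"
    using p(3) finite_children[OF T] by simp
  moreover have "card (children X r par p) \<le> 2"
    using card_nbrs_tree_adj[OF T p(1)] deg p(2) by simp
  ultimately have "card (children X r par p) = 1 \<or> card (children X r par p) = 2"
    by linarith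
  then show ?thesis
    using that by (meson card_1_singletonE card_2_iff)
qed

lemma short_path_leaf_parent:
  assumes T: "rooted_tree X r par h" and p: "p \<in> X" "p \<noteq> r" "children X r par p \<noteq> {}"
    and deg: "card (nbrs (tree_adj r par) X p) \<le> 3"
  shows "short_path (tree_adj r par) (insert p (children X r par p))"
proof -
  let ?adj = "tree_adj r par"
  have nbrs_p: "nbrs ?adj X p = insert (par p) (children X r par p)"
    using nbrs_tree_adj[OF T p(1)] p(2) by auto
  note irr = tree_adj_irrefl[OF T p(1)]
  consider (one) c where "children X r par p = {c}"
    | (two) c1 c2 where "children X r par p = {c1, c2}" "c1 \<noteq> c2"
    by (rule children_one_or_two[OF T p deg])
  then show ?thesis
  proof cases
    case (one c)
    then show ?thesis
      using short_path_nbr[of c ?adj X p] nbrs_p irr by simp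
  next
    case (two c1 c2)
    then have "short_path ?adj {c1, p, c2}"
      using nbrs_p irr by (intro short_path_nbrs[where X = X]) auto
    then show ?thesis
      using two by (simp add: insert_commute)
  qed
qed

lemma star_short_path_partition_or_checkered:
  assumes T: "rooted_tree X r par h" and star: "X = insert r (children X r par r)"
    and "children X r par r \<noteq> {}" and deg: "card (nbrs (tree_adj r par) X r) \<le> 3"
  shows "block_partition (short_path (tree_adj r par)) X \<or>
    (\<exists>black. checkered_graph (tree_adj r par) X black)"
proof -
  let ?adj = "tree_adj r par" and ?C = "children X r par r"
  have nbrs_r: "nbrs ?adj X r = ?C"
    using nbrs_tree_adj[OF T rooted_tree_root[OF T]] by simp
  have irr: "\<not> ?adj r r"
    using tree_adj_irrefl[OF T rooted_tree_root[OF T]] .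
  have "card ?C \<noteq> 0"
    using assms(3) finite_children[OF T] by simp
  moreover have "card ?C \<le> 3"
    using deg nbrs_r by simp
  ultimately consider "card ?C = 1" | "card ?C = 2" | "card ?C = 3"
    by linarith
  then show ?thesis
  proof cases
    case 1
    then obtain c where "?C = {c}"
      by (meson card_1_singletonE)
    then have "short_path ?adj X"
      using star nbrs_r short_path_nbr[of c ?adj X r] irr by simp
    then show ?thesis
      by (simp add: block_partition_single)
  next
    case 2
    then obtain c1 c2 where c12: "?C = {c1, c2}" "c1 \<noteq> c2"
      by (meson card_2_iff)
    then have "short_path ?adj {c1, r, c2}"
      using nbrs_r by (intro short_path_nbrs[where X = X]) (use irr in auto)
    moreover have "X = {c1, r, c2}"
      using star c12 by auto
    ultimately show ?thesis
      by (simp add: block_partition_single)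
  next
    case 3
    have "checkered_graph ?adj X (\<lambda>x. x \<noteq> r)"
      unfolding checkered_graph_def
    proof (intro conjI ballI impI)
      fix x y assume "x \<in> X" "y \<in> X" "?adj x y"
      then show "(x \<noteq> r) \<noteq> (y \<noteq> r)"
        using star unfolding tree_adj_def children_def by auto
    next
      fix x assume "x \<in> X" "\<not> x \<noteq> r"
      then show "card (nbrs ?adj X x) = 3"
        using 3 nbrs_r by simp
    qed
    then show ?thesis
      by blast
  qed
qed

lemma checkered_tree_extend:
  assumes T: "rooted_tree X r par h" and p: "p \<in> X" "p \<noteq> r"
    and leaves: "\<forall>c\<in>children X r par p. children X r par c = {}"
    and chk: "checkered_graph (tree_adj r par) (X - insert p (children X r par p)) black"
    and two: "card (children X r par p) = 2" and black_q: "black (par p)"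
  shows "checkered_graph (tree_adj r par) X
    (\<lambda>x. if x = p then False else if x \<in> children X r par p then True else black x)"
    (is "checkered_graph ?adj X ?black")
proof -
  define C where "C = children X r par p"
  define X' where "X' = X - insert p C"
  note prune = rooted_tree_prune[OF T p leaves, folded C_def, folded X'_def]
  have nbrs_p: "nbrs ?adj X p = insert (par p) C"
    using nbrs_tree_adj[OF T p(1)] p(2) unfolding C_def by auto
  have nbrs_C: "nbrs ?adj X c = {p}" if "c \<in> C" for c
    using nbrs_tree_adj_leaf[OF T, of c] that leaves unfolding C_def children_def by auto
  have "p \<notin> C"
    using rooted_treeD(2)[OF T p] unfolding C_def children_def by auto
  have "par p \<notin> insert p C"
    using prune(2) unfolding X'_def by blast
  have differ: "?black x \<noteq> ?black y" if "x = p \<or> x \<in> C" "y \<in> nbrs ?adj X x" for x y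
    using that nbrs_p nbrs_C black_q \<open>p \<notin> C\<close> \<open>par p \<notin> insert p C\<close> unfolding C_def by auto
  show ?thesis
    unfolding checkered_graph_def
  proof (intro conjI ballI impI)
    fix x y assume xy: "x \<in> X" "y \<in> X" "?adj x y"
    moreover have "?adj y x"
      using xy(3) tree_adj_sym by metis
    ultimately have "y \<in> nbrs ?adj X x" "x \<in> nbrs ?adj X y"
      unfolding nbrs_def by simp_all
    consider "x \<in> X'" "y \<in> X'" | "x = p \<or> x \<in> C" | "y = p \<or> y \<in> C"
      using xy(1,2) unfolding X'_def by blast
    then show "?black x \<noteq> ?black y"
    proof cases
      case 1
      then show ?thesis
        using chk xy(3) unfolding checkered_graph_def X'_def C_def by auto
    next
      case 2
      then show ?thesis
        using differ \<open>y \<in> nbrs ?adj X x\<close> by simp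
    next
      case 3
      then show ?thesis
        using differ[of y x] \<open>x \<in> nbrs ?adj X y\<close> by simp
    qed
  next
    fix x assume x: "x \<in> X" "\<not> ?black x"
    show "card (nbrs ?adj X x) = 3"
    proof (cases "x = p")
      case True
      then show ?thesis
        using nbrs_p two \<open>par p \<notin> insert p C\<close> finite_children[OF T] unfolding C_def by simp
    next
      case False
      then have "x \<in> X'" "\<not> black x"
        using x unfolding X'_def C_def by (auto split: if_splits)
      moreover have "x \<noteq> par p"
        using black_q \<open>\<not> black x\<close> by blast
      ultimately show ?thesis
        using chk prune(4) unfolding checkered_graph_def X'_def C_def by auto
    qed
  qed
qed

lemma tree_prune_short_path_partition_or_checkered:
  assumes T: "rooted_tree X r par h" and p: "p \<in> X" "p \<noteq> r" "children X r par p \<noteq> {}"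
    and leaves: "\<forall>c\<in>children X r par p. children X r par c = {}"
    and deg: "\<forall>x\<in>X. card (nbrs (tree_adj r par) X x) \<le> 3"
    and chk: "checkered_graph (tree_adj r par) (X - insert p (children X r par p)) black"
  shows "block_partition (short_path (tree_adj r par)) X \<or>
    (\<exists>black. checkered_graph (tree_adj r par) X black)"
proof -
  let ?adj = "tree_adj r par"
  define C where "C = children X r par p"
  define q where "q = par p"
  define X' where "X' = X - insert p C"
  note prune = rooted_tree_prune[OF T p(1,2) leaves, folded C_def, folded X'_def q_def]
  have chk': "checkered_graph ?adj X' black"
    using chk unfolding X'_def C_def .
  have nbrs_p: "nbrs ?adj X p = insert q C"
    using nbrs_tree_adj[OF T p(1)] p(2) unfolding C_def q_def by auto
  have "C \<subseteq> X"
    unfolding C_def children_def by blast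
  have "?adj q p"
    using tree_adj_par[OF p(2)] tree_adj_sym unfolding q_def by metis
  moreover have "X' \<subseteq> X" "p \<in> X - X'" "card (nbrs ?adj X q) \<le> 3"
    using p(1) deg prune(2) unfolding X'_def by auto
  ultimately have "black q"
    using checkered_graph_black_if_nbr_removed[OF rooted_tree_finite[OF T] _ _ _ prune(2) _ chk']
    by blast
  from deg p(1) have "card (nbrs ?adj X p) \<le> 3"
    by blast
  then consider (one) c where "C = {c}" | (two) c1 c2 where "C = {c1, c2}" "c1 \<noteq> c2"
    unfolding C_def by (rule children_one_or_two[OF T p])
  then show ?thesis
  proof cases
    case (one c)
    have "block_partition (short_path ?adj) (X' - {q})"
      using checkered_tree_minus_black[OF prune(1) chk' prune(2) \<open>black q\<close>]
      by (rule block_partition_mono) (rule short_path_if_white_centred_path)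
    moreover have "short_path ?adj {c, p, q}"
      using nbrs_p one prune(2) tree_adj_irrefl[OF T p(1)] unfolding X'_def
      by (intro short_path_nbrs[where X = X]) auto
    moreover have "X = {c, p, q} \<union> (X' - {q})" "{c, p, q} \<inter> (X' - {q}) = {}"
      using p(1) one prune(2) \<open>C \<subseteq> X\<close> unfolding X'_def by auto
    ultimately show ?thesis
      using block_partition_insert[of "short_path ?adj" "X' - {q}" "{c, p, q}"] by simp
  next
    case (two c1 c2)
    then have "card (children X r par p) = 2"
      unfolding C_def by simp
    then show ?thesis
      using checkered_tree_extend[OF T p(1,2) leaves chk] \<open>black q\<close> unfolding q_def by blast
  qed
qed

lemma tree_short_path_partition_or_checkered:
  assumes "rooted_tree X r par h" "\<forall>x\<in>X. card (nbrs (tree_adj r par) X x) \<le> 3"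
  shows "block_partition (short_path (tree_adj r par)) X \<or>
    (\<exists>black. checkered_graph (tree_adj r par) X black)"
  using assms
proof (induction "card X" arbitrary: X rule: less_induct)
  case less
  note T = less.prems(1) and deg = less.prems(2)
  let ?adj = "tree_adj r par"
  show ?case
  proof (cases "X = {r}")
    case True
    then have "checkered_graph ?adj X (\<lambda>_. True)"
      using tree_adj_irrefl[OF T] unfolding checkered_graph_def by auto
    then show ?thesis
      by blast
  next
    case False
    obtain p where p: "p \<in> X" "children X r par p \<noteq> {}"
      "\<forall>c\<in>children X r par p. children X r par c = {}" "p = r \<longrightarrow> X = insert r (children X r par r)"
      by (rule rooted_tree_leaf_parent[OF T False])
    show ?thesis
    proof (cases "p = r")
      case True
      then show ?thesis
        using star_short_path_partition_or_checkered[OF T] p deg rooted_tree_root[OF T] by simp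
    next
      case False
      define C where "C = children X r par p"
      define X' where "X' = X - insert p C"
      note prune = rooted_tree_prune[OF T p(1) False p(3), folded C_def, folded X'_def]
      have cluster: "short_path ?adj (insert p C)"
        using short_path_leaf_parent[OF T p(1) False p(2)] deg p(1) unfolding C_def by blast
      have X: "X = insert p C \<union> X'" "insert p C \<inter> X' = {}"
        using p(1) unfolding X'_def C_def children_def by auto
      have "card (nbrs ?adj X' x) \<le> 3" if "x \<in> X'" for x
        using card_nbrs_Diff_le[OF rooted_tree_finite[OF T], of ?adj "insert p C" x] deg that
        unfolding X'_def by force
      then have "block_partition (short_path ?adj) X' \<or> (\<exists>black. checkered_graph ?adj X' black)"
        using less.hyps[OF prune(3) prune(1)] by blast
      then show ?thesis
      proof (elim disjE exE)
        assume "block_partition (short_path ?adj) X'"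
        then have "block_partition (short_path ?adj) (insert p C \<union> X')"
          using cluster X(2) by (rule block_partition_insert)
        then show ?thesis
          using X(1) by simp
      next
        fix black assume "checkered_graph ?adj X' black"
        then show ?thesis
          using tree_prune_short_path_partition_or_checkered[OF T p(1) False p(2,3) deg]
          unfolding X'_def C_def by blast
      qed
    qed
  qed
qed

lemma checkered_graph_white_nbrs:
  assumes "finite X" and chk: "checkered_graph adj' X black"
    and sub: "\<forall>x\<in>X. \<forall>y\<in>X. adj' x y \<longrightarrow> adj x y"
    and "card (nbrs adj X z) \<le> 3" "z \<in> X" "\<not> black z"
  shows "nbrs adj' X z = nbrs adj X z"
proof (rule card_subset_eq[OF finite_nbrs[OF assms(1)]])
  show le: "nbrs adj' X z \<subseteq> nbrs adj X z"
    using sub assms(5) unfolding nbrs_def by blast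
  have "card (nbrs adj' X z) = 3"
    using chk assms(5,6) unfolding checkered_graph_def by blast
  moreover have "card (nbrs adj' X z) \<le> card (nbrs adj X z)"
    by (rule card_mono[OF finite_nbrs[OF assms(1)] le])
  ultimately show "card (nbrs adj' X z) = card (nbrs adj X z)"
    using assms(4) by simp
qed

text \<open>Both ends of a non-tree edge are black. Remove one end \<open>x\<close>; the other end \<open>y\<close> is a
  leaf of a white-centred path \<open>{y, b, z}\<close>, which is split into the edges \<open>{x, y}\<close> and \<open>{b, z}\<close>.\<close>

lemma checkered_tree_plus_edge:
  assumes T: "rooted_tree X r par h" and chk: "checkered_graph (tree_adj r par) X black"
    and tree_sub: "\<forall>x\<in>X. \<forall>y\<in>X. tree_adj r par x y \<longrightarrow> adj x y"
    and sym: "\<And>x y. adj x y \<Longrightarrow> adj y x" and irr: "\<And>x. \<not> adj x x"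
    and deg: "\<forall>x\<in>X. card (nbrs adj X x) \<le> 3"
    and xy: "x \<in> X" "y \<in> X" "adj x y" "\<not> tree_adj r par x y"
  shows "block_partition (short_path adj) X"
proof -
  let ?tadj = "tree_adj r par"
  have black_ends: "black u" if "u \<in> X" "v \<in> X" "adj u v" "\<not> ?tadj u v" for u v
  proof (rule ccontr)
    assume "\<not> black u"
    then have "nbrs ?tadj X u = nbrs adj X u"
      using checkered_graph_white_nbrs[OF rooted_tree_finite[OF T] chk tree_sub] deg that(1)
      by blast
    moreover have "v \<in> nbrs adj X u"
      using that(2,3) unfolding nbrs_def by blast
    ultimately show False
      using that(4) unfolding nbrs_def by blast
  qed
  have "\<not> ?tadj y x"
    using xy(4) by (simp add: tree_adj_sym)
  then have "black x" "black y"
    using black_ends[OF xy] black_ends[OF xy(2,1) sym[OF xy(3)]] by simp_all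
  have "y \<in> X - {x}"
    using xy(2,3) irr by auto
  with checkered_tree_minus_black[OF T chk xy(1) \<open>black x\<close>]
  obtain B where B: "y \<in> B" "B \<subseteq> X - {x}" "white_centred_path ?tadj black B"
    and rest: "block_partition (white_centred_path ?tadj black) (X - {x} - B)"
    by (rule block_partition_remove_block)
  obtain a b c where abc: "B = {a, b, c}" "distinct [a, b, c]" "?tadj b a" "?tadj b c" "\<not> black b"
    using B(3) unfolding white_centred_path_def by blast
  obtain z where z: "B = {y, b, z}" "distinct [y, b, z]" "adj b z"
  proof (cases "y = a")
    case True
    then show ?thesis
      using that[of c] abc tree_sub B(2) by auto
  next
    case False
    then have "y = c"
      using abc B(1) \<open>black y\<close> by auto
    then show ?thesis
      using that[of a] abc tree_sub B(2) by (auto simp: insert_commute)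
  qed
  have "block_partition (short_path adj) (X - {x} - B)"
    using rest
  proof (rule block_partition_mono)
    fix B' assume "B' \<subseteq> X - {x} - B" "white_centred_path ?tadj black B'"
    then show "short_path adj B'"
      by (intro short_path_mono[OF short_path_if_white_centred_path]) (use tree_sub in blast)+
  qed
  then have "block_partition (short_path adj) ({b, z} \<union> (X - {x} - B))"
    by (rule block_partition_insert) (use z in \<open>auto intro: short_path_edge\<close>)
  then have "block_partition (short_path adj) ({x, y} \<union> ({b, z} \<union> (X - {x} - B)))"
    by (rule block_partition_insert) (use z B(2) xy(3) irr in \<open>auto intro: short_path_edge\<close>)
  moreover have "{x, y} \<union> ({b, z} \<union> (X - {x} - B)) = X"
    using z B xy(1) by auto
  ultimately show ?thesis
    by simp
qed

lemma checkered_graph_cong: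
  assumes "\<forall>x\<in>X. \<forall>y\<in>X. adj x y \<longleftrightarrow> adj' x y"
  shows "checkered_graph adj X black \<longleftrightarrow> checkered_graph adj' X black"
proof -
  have "nbrs adj X x = nbrs adj' X x" if "x \<in> X" for x
    using assms that unfolding nbrs_def by auto
  then show ?thesis
    using assms unfolding checkered_graph_def by auto
qed

lemma spanning_tree_of_connected_graph:
  assumes "finite X" "X \<noteq> {}" and sym: "\<And>x y. adj x y \<Longrightarrow> adj y x"
    and adj_in: "\<And>x y. adj x y \<Longrightarrow> x \<in> X"
    and conn: "\<forall>x\<in>X. \<forall>y\<in>X. (x, y) \<in> {(a, b). adj a b}\<^sup>*"
  obtains r par h where "rooted_tree X r par h" "\<forall>x\<in>X. \<forall>y\<in>X. tree_adj r par x y \<longrightarrow> adj x y"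
proof -
  obtain r where "r \<in> X"
    using assms(2) by blast
  moreover have "{(a, b). adj a b} \<subseteq> X \<times> X"
    using adj_in sym by blast
  ultimately obtain par h where T: "rooted_tree X r par h"
    and edges: "\<forall>x\<in>X - {r}. (par x, x) \<in> {(a, b). adj a b}"
    using spanning_rooted_tree[OF assms(1)] conn by metis
  moreover have "\<forall>x\<in>X. \<forall>y\<in>X. tree_adj r par x y \<longrightarrow> adj x y"
    using edges sym unfolding tree_adj_def by blast
  ultimately show ?thesis
    using that by blast
qed

lemma short_path_partition_or_checkered_tree:
  assumes fin: "finite X" and "X \<noteq> {}"
    and sym: "\<And>x y. adj x y \<Longrightarrow> adj y x" and irr: "\<And>x. \<not> adj x x"
    and adj_in: "\<And>x y. adj x y \<Longrightarrow> x \<in> X"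
    and conn: "\<forall>x\<in>X. \<forall>y\<in>X. (x, y) \<in> {(a, b). adj a b}\<^sup>*"
    and deg: "\<forall>x\<in>X. card (nbrs adj X x) \<le> 3"
  shows "block_partition (short_path adj) X \<or>
    (\<exists>r par h black. rooted_tree X r par h \<and> (\<forall>x\<in>X. \<forall>y\<in>X. adj x y \<longleftrightarrow> tree_adj r par x y) \<and>
       checkered_graph adj X black)"
proof -
  obtain r par h where T: "rooted_tree X r par h"
    and tree_sub: "\<forall>x\<in>X. \<forall>y\<in>X. tree_adj r par x y \<longrightarrow> adj x y"
    using fin assms(2) sym adj_in conn by (rule spanning_tree_of_connected_graph)
  let ?tadj = "tree_adj r par"
  have "card (nbrs ?tadj X x) \<le> 3" if "x \<in> X" for x
  proof -
    have "card (nbrs ?tadj X x) \<le> card (nbrs adj X x)"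
      using tree_sub that by (intro card_mono[OF finite_nbrs[OF fin]]) (auto simp: nbrs_def)
    then show ?thesis
      using deg that by force
  qed
  then have "block_partition (short_path ?tadj) X \<or> (\<exists>black. checkered_graph ?tadj X black)"
    using tree_short_path_partition_or_checkered[OF T] by blast
  then show ?thesis
  proof (elim disjE exE)
    assume "block_partition (short_path ?tadj) X"
    then show ?thesis
      by (rule disjI1[OF block_partition_mono]) (use short_path_mono tree_sub in blast)
  next
    fix black assume chk: "checkered_graph ?tadj X black"
    show ?thesis
    proof (cases "\<forall>x\<in>X. \<forall>y\<in>X. adj x y \<longleftrightarrow> ?tadj x y")
      case True
      then show ?thesis
        using T chk checkered_graph_cong[OF True] by blast
    next
      case False
      then obtain x y where "x \<in> X" "y \<in> X" "adj x y" "\<not> ?tadj x y"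
        using tree_sub by blast
      with T chk tree_sub sym irr deg have "block_partition (short_path adj) X"
        by (rule checkered_tree_plus_edge)
      then show ?thesis
        by blast
    qed
  qed
qed

section \<open>Facet cycles of sets of facets\<close>

text \<open>A step \<open>(f, x)\<close> of a trail moves from the current vertex to \<open>x\<close> through the facet \<open>f\<close>.\<close>

fun trail :: "'v \<Rightarrow> ('v set \<times> 'v) list \<Rightarrow> 'v \<Rightarrow> bool" where
  "trail u [] w \<longleftrightarrow> u = w"
| "trail u ((f, x) # xs) w \<longleftrightarrow> u \<in> f \<and> x \<in> f \<and> u \<noteq> x \<and> trail x xs w"

definition facet_cycle_at :: "'v set set \<Rightarrow> 'v \<Rightarrow> bool" where
  "facet_cycle_at S z \<longleftrightarrow>
     (\<exists>xs. trail z xs z \<and> xs \<noteq> [] \<and> distinct (map fst xs) \<and> set (map fst xs) = S)"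

definition facet_cycle_via :: "'v set set \<Rightarrow> 'v \<Rightarrow> 'v set \<Rightarrow> 'v \<Rightarrow> bool" where
  "facet_cycle_via S y t x \<longleftrightarrow>
     (\<exists>xs. trail y ((t, x) # xs) y \<and> distinct (t # map fst xs) \<and> insert t (set (map fst xs)) = S)"

fun reverse_trail :: "'v \<Rightarrow> ('v set \<times> 'v) list \<Rightarrow> ('v set \<times> 'v) list" where
  "reverse_trail u [] = []"
| "reverse_trail u ((f, x) # xs) = reverse_trail x xs @ [(f, u)]"

lemma trail_append: "trail u (xs @ ys) w \<longleftrightarrow> (\<exists>m. trail u xs m \<and> trail m ys w)"
  by (induction xs arbitrary: u) auto

lemma trail_reverse_trail: "trail u xs w \<Longrightarrow> trail w (reverse_trail u xs) u"
  by (induction u xs w rule: trail.induct) (auto simp: trail_append)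

lemma map_fst_reverse_trail: "map fst (reverse_trail u xs) = rev (map fst xs)"
  by (induction u xs rule: reverse_trail.induct) auto

lemma trail_rotate:
  assumes "trail z (xs @ ys) z" "trail z xs m"
  shows "trail m (ys @ xs) m"
proof -
  obtain m' where "trail z xs m'" "trail m' ys z"
    using assms(1) trail_append by metis
  moreover have "m' = m"
    using assms(2) calculation(1) by (induction xs arbitrary: z) auto
  ultimately show ?thesis
    using trail_append assms(2) by metis
qed

lemma facet_cycle_at_imp_via:
  assumes "facet_cycle_at S z" "t \<in> S"
  obtains y x where "facet_cycle_via S y t x"
proof -
  obtain xs where xs: "trail z xs z" "distinct (map fst xs)" "set (map fst xs) = S"
    using assms(1) unfolding facet_cycle_at_def by blast
  obtain i where i: "i < length xs" "fst (xs ! i) = t"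
    using assms(2) xs(3) by (auto simp: in_set_conv_nth)
  have rotate: "rotate i xs = drop i xs @ take i xs"
    using i(1) by (simp add: rotate_drop_take)
  have "xs ! i = (t, snd (xs ! i))"
    using i(2) by (cases "xs ! i") simp
  then have first: "drop i xs = (t, snd (xs ! i)) # drop (Suc i) xs"
    using Cons_nth_drop_Suc[OF i(1)] by simp
  obtain m where "trail z (take i xs) m"
    using xs(1) trail_append[of z "take i xs" "drop i xs" z] by auto
  then have "trail m (rotate i xs) m"
    using trail_rotate[of z "take i xs" "drop i xs"] xs(1) rotate by simp
  moreover have "distinct (map fst (rotate i xs))" "set (map fst (rotate i xs)) = S"
    using xs(2,3) by (simp_all flip: rotate_map)
  ultimately have "facet_cycle_via S m t (snd (xs ! i))"
    unfolding facet_cycle_via_def rotate first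
    by (intro exI[of _ "drop (Suc i) xs @ take i xs"]) auto
  then show ?thesis
    by (rule that)
qed

lemma facet_cycle_viaD:
  assumes "facet_cycle_via S y t x"
  shows "facet_cycle_at S y" "facet_cycle_at S x" "t \<in> S" "y \<in> t" "x \<in> t" "y \<noteq> x"
proof -
  obtain xs where xs: "trail y ((t, x) # xs) y" "distinct (t # map fst xs)"
    "insert t (set (map fst xs)) = S"
    using assms unfolding facet_cycle_via_def by blast
  show "facet_cycle_at S y"
    unfolding facet_cycle_at_def using xs by (intro exI[of _ "(t, x) # xs"]) auto
  show "t \<in> S" "y \<in> t" "x \<in> t" "y \<noteq> x"
    using xs by auto
  have "trail x (xs @ [(t, x)]) x"
    using trail_rotate[of y "[(t, x)]" xs x] xs(1) by simp
  then show "facet_cycle_at S x"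
    unfolding facet_cycle_at_def using xs(2,3) by (intro exI[of _ "xs @ [(t, x)]"]) auto
qed

lemma facet_cycle_via_reverse:
  assumes "facet_cycle_via S y t x"
  shows "facet_cycle_via S x t y"
proof -
  obtain xs where xs: "trail y ((t, x) # xs) y" "distinct (t # map fst xs)"
    "insert t (set (map fst xs)) = S"
    using assms unfolding facet_cycle_via_def by blast
  then have "trail x ((t, y) # reverse_trail x xs) x"
    using trail_reverse_trail[of x xs y] by auto
  then show ?thesis
    unfolding facet_cycle_via_def using xs(2,3)
    by (intro exI[of _ "reverse_trail x xs"]) (auto simp: map_fst_reverse_trail)
qed

lemma facet_cycle_at_Un:
  assumes "facet_cycle_at S1 z" "facet_cycle_at S2 z" "S1 \<inter> S2 = {}"
  shows "facet_cycle_at (S1 \<union> S2) z"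
proof -
  obtain xs where xs: "trail z xs z" "xs \<noteq> []" "distinct (map fst xs)" "set (map fst xs) = S1"
    using assms(1) unfolding facet_cycle_at_def by blast
  obtain ys where ys: "trail z ys z" "distinct (map fst ys)" "set (map fst ys) = S2"
    using assms(2) unfolding facet_cycle_at_def by blast
  have "trail z (xs @ ys) z"
    using xs(1) ys(1) trail_append by metis
  then show ?thesis
    unfolding facet_cycle_at_def using xs ys assms(3) by (intro exI[of _ "xs @ ys"]) auto
qed

text \<open>Splicing: enter the second cycle through \<open>t'\<close> and come back through \<open>t\<close>.\<close>

lemma facet_cycle_via_splice:
  assumes "facet_cycle_via S1 y t x" "facet_cycle_via S2 y' t' x'" "S1 \<inter> S2 = {}"
    "y \<in> t'" "y \<noteq> x'" "y' \<in> t" "y' \<noteq> x"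
  shows "facet_cycle_at (S1 \<union> S2) y"
proof -
  obtain xs where xs: "trail y ((t, x) # xs) y" "distinct (t # map fst xs)"
    "insert t (set (map fst xs)) = S1"
    using assms(1) unfolding facet_cycle_via_def by blast
  obtain ys where ys: "trail y' ((t', x') # ys) y'" "distinct (t' # map fst ys)"
    "insert t' (set (map fst ys)) = S2"
    using assms(2) unfolding facet_cycle_via_def by blast
  have "trail x' (ys @ (t, x) # xs) y"
    using xs(1) ys(1) assms(6,7) trail_append by fastforce
  then have "trail y ((t', x') # ys @ (t, x) # xs) y"
    using ys(1) assms(4,5) by simp
  then show ?thesis
    unfolding facet_cycle_at_def using xs(2,3) ys(2,3) assms(3)
    by (intro exI[of _ "(t', x') # ys @ (t, x) # xs"]) auto
qed

lemma card_3_finite: "card f = 3 \<Longrightarrow> finite f"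
  by (simp add: card_ge_0_finite)

lemma triangle_pair_meets_shared_edge:
  assumes "card t = 3" "card (t \<inter> t') = 2" "x \<in> t" "y \<in> t" "x \<noteq> y"
  shows "x \<in> t' \<or> y \<in> t'"
proof (rule ccontr)
  assume "\<not> (x \<in> t' \<or> y \<in> t')"
  then have "card (t \<inter> t') \<le> card (t - {x, y})"
    using card_3_finite[OF assms(1)] by (intro card_mono) auto
  moreover have "card (t - {x, y}) = 1"
    using assms by (simp add: card_Diff_subset)
  ultimately show False
    using assms(2) by simp
qed

lemma facet_cycle_via_towards:
  assumes "facet_cycle_via S y t x" "card t = 3" "card (t \<inter> t') = 2"
  obtains a b where "facet_cycle_via S a t b" "a \<in> t'" "{a, b} = {y, x}"
proof -
  have "y \<in> t' \<or> x \<in> t'"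
    using triangle_pair_meets_shared_edge[OF assms(2,3)] facet_cycle_viaD(4-6)[OF assms(1)] by blast
  then show ?thesis
  proof
    assume "y \<in> t'"
    then show ?thesis
      using that[OF assms(1)] by blast
  next
    assume "x \<in> t'"
    then show ?thesis
      using that[OF facet_cycle_via_reverse[OF assms(1)]] by (simp add: insert_commute)
  qed
qed

lemma facet_cycle_at_Un_adjacent:
  assumes "facet_cycle_at S1 z1" "facet_cycle_at S2 z2" "S1 \<inter> S2 = {}" "t \<in> S1" "t' \<in> S2"
    "card t = 3" "card t' = 3" "card (t \<inter> t') = 2"
  shows "\<exists>z. facet_cycle_at (S1 \<union> S2) z"
proof -
  obtain y x where c1: "facet_cycle_via S1 y t x"
    using facet_cycle_at_imp_via[OF assms(1,4)] .
  obtain y' x' where c2: "facet_cycle_via S2 y' t' x'"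
    using facet_cycle_at_imp_via[OF assms(2,5)] .
  show ?thesis
  proof (cases "{y, x} \<inter> {y', x'} = {}")
    case False
    then obtain w where "w \<in> {y, x}" "w \<in> {y', x'}"
      by blast
    then have "facet_cycle_at S1 w" "facet_cycle_at S2 w"
      using facet_cycle_viaD(1,2)[OF c1] facet_cycle_viaD(1,2)[OF c2] by auto
    then show ?thesis
      using facet_cycle_at_Un[OF _ _ assms(3)] by blast
  next
    case True
    obtain a b where ab: "facet_cycle_via S1 a t b" "a \<in> t'" "{a, b} = {y, x}"
      using facet_cycle_via_towards[OF c1 assms(6,8)] .
    have "card (t' \<inter> t) = 2"
      using assms(8) by (simp add: Int_commute)
    then obtain a' b' where ab': "facet_cycle_via S2 a' t' b'" "a' \<in> t" "{a', b'} = {y', x'}"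
      by (rule facet_cycle_via_towards[OF c2 assms(7)])
    have "a \<noteq> b'" "a' \<noteq> b"
      using True ab(3) ab'(3) by blast+
    then show ?thesis
      using facet_cycle_via_splice[OF ab(1) ab'(1) assms(3) ab(2) _ ab'(2)] by blast
  qed
qed

lemma trail_nth:
  assumes "trail u xs w" "i < length xs"
  shows "(u # map snd xs) ! i \<in> fst (xs ! i) \<and> snd (xs ! i) \<in> fst (xs ! i) \<and>
    (u # map snd xs) ! i \<noteq> snd (xs ! i)"
  using assms
proof (induction u xs w arbitrary: i rule: trail.induct)
  case (2 u f x xs w)
  then show ?case
    by (cases i) auto
qed simp

lemma trail_last: "trail u xs w \<Longrightarrow> (u # map snd xs) ! length xs = w"
  by (induction u xs w rule: trail.induct) auto

lemma has_facet_cycle_if_facet_cycle_at: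
  assumes "facet_cycle_at F z"
  shows "has_facet_cycle F"
proof -
  obtain xs where xs: "trail z xs z" "distinct (map fst xs)" "set (map fst xs) = F"
    using assms unfolding facet_cycle_at_def by blast
  show ?thesis
    unfolding has_facet_cycle_def
  proof (intro exI conjI allI impI)
    show "distinct (map fst xs)" "set (map fst xs) = F"
      "length (z # map snd xs) = Suc (length (map fst xs))"
      using xs by simp_all
    show "(z # map snd xs) ! 0 = (z # map snd xs) ! length (map fst xs)"
      using trail_last[OF xs(1)] by simp
    fix i assume "i < length (map fst xs)"
    then show "(z # map snd xs) ! i \<in> map fst xs ! i" "(z # map snd xs) ! Suc i \<in> map fst xs ! i"
      "(z # map snd xs) ! i \<noteq> (z # map snd xs) ! Suc i"
      using trail_nth[OF xs(1)] by simp_all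
  qed
qed

lemma facet_cycle_at_pair:
  assumes "s \<noteq> t" "card (s \<inter> t) = 2"
  shows "\<exists>z. facet_cycle_at {s, t} z"
proof -
  obtain a b where "s \<inter> t = {a, b}" "a \<noteq> b"
    using assms(2) by (meson card_2_iff)
  then have "trail a [(s, b), (t, a)] a"
    by auto
  moreover have "distinct (map fst [(s, b), (t, a)])" "set (map fst [(s, b), (t, a)]) = {s, t}"
    using assms(1) by auto
  ultimately show ?thesis
    unfolding facet_cycle_at_def by blast
qed

lemma triangle_two_edges:
  assumes "card s = 3" "e1 \<subseteq> s" "e2 \<subseteq> s" "card e1 = 2" "card e2 = 2" "e1 \<noteq> e2"
  obtains w a c where "w \<in> e1 \<inter> e2" "a \<in> e1 - e2" "c \<in> e2 - e1"
proof -
  have fin: "finite e1" "finite e2"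
    using assms(2,3) card_3_finite[OF assms(1)] finite_subset by blast+
  then have "\<not> e1 \<subseteq> e2" "\<not> e2 \<subseteq> e1"
    using assms(4-6) card_subset_eq[of e2 e1] card_subset_eq[of e1 e2] by auto
  moreover have "e1 \<inter> e2 \<noteq> {}"
  proof
    assume "e1 \<inter> e2 = {}"
    then have "card (e1 \<union> e2) = 4"
      using fin assms(4,5) by (simp add: card_Un_disjoint)
    moreover have "card (e1 \<union> e2) \<le> card s"
      using assms(2,3) by (intro card_mono card_3_finite[OF assms(1)]) auto
    ultimately show False
      using assms(1) by simp
  qed
  ultimately show ?thesis
    using that by blast
qed

lemma facet_cycle_at_path3:
  assumes "distinct [s1, s2, s3]" "card (s1 \<inter> s2) = 2" "card (s2 \<inter> s3) = 2"
    "s1 \<inter> s2 \<noteq> s2 \<inter> s3" "card s2 = 3"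
  shows "\<exists>z. facet_cycle_at {s1, s2, s3} z"
proof -
  obtain w a c where wac: "w \<in> (s1 \<inter> s2) \<inter> (s2 \<inter> s3)" "a \<in> (s1 \<inter> s2) - (s2 \<inter> s3)"
    "c \<in> (s2 \<inter> s3) - (s1 \<inter> s2)"
    by (rule triangle_two_edges[OF assms(5) _ _ assms(2,3,4)]) auto
  then have "trail w [(s1, a), (s2, c), (s3, w)] w"
    by auto
  moreover have "distinct (map fst [(s1, a), (s2, c), (s3, w)])"
    "set (map fst [(s1, a), (s2, c), (s3, w)]) = {s1, s2, s3}"
    using assms(1) by auto
  ultimately show ?thesis
    unfolding facet_cycle_at_def by blast
qed

section \<open>The dual graph of a simplicial 2-manifold\<close>

lemma simplicial_2_manifoldD:
  assumes "simplicial_2_manifold F"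
  shows "finite F" "F \<noteq> {}" "\<And>f. f \<in> F \<Longrightarrow> card f = 3"
    "\<And>e. e \<in> edges F \<Longrightarrow> card {f\<in>F. e \<subseteq> f} \<le> 2"
    "\<And>v a b. v \<in> vertices F \<Longrightarrow> a \<in> link_vertices F v \<Longrightarrow> b \<in> link_vertices F v \<Longrightarrow>
       (a, b) \<in> (link_rel F v)\<^sup>*"
  using assms unfolding simplicial_2_manifold_def by simp_all

lemma edge_in_edges: "card e = 2 \<Longrightarrow> e \<subseteq> f \<Longrightarrow> f \<in> F \<Longrightarrow> e \<in> edges F"
  unfolding edges_def by blast

lemma edge_in_at_most_two_facets:
  assumes "simplicial_2_manifold F" "card e = 2" "{f, g, k} \<subseteq> F" "e \<subseteq> f" "e \<subseteq> g" "e \<subseteq> k"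
  shows "f = g \<or> g = k \<or> f = k"
proof (rule ccontr)
  assume "\<not> ?thesis"
  then have "card {f, g, k} = 3"
    by (simp add: card_insert_if)
  moreover have "card {f, g, k} \<le> card {h\<in>F. e \<subseteq> h}"
    using simplicial_2_manifoldD(1)[OF assms(1)] assms(3-6) by (intro card_mono) auto
  moreover have "e \<in> edges F"
    using edge_in_edges[OF assms(2,4)] assms(3) by simp
  then have "card {h\<in>F. e \<subseteq> h} \<le> 2"
    by (rule simplicial_2_manifoldD(4)[OF assms(1)])
  ultimately show False
    by simp
qed

lemma card_2_subsets_triangle: "card f = 3 \<Longrightarrow> card {e. e \<subseteq> f \<and> card e = 2} = 3"
  using n_subsets[OF card_3_finite, of f 2] by (simp add: choose_two)

lemma card_Int_triangles:
  assumes "card f = 3" "card g = 3" "f \<noteq> g"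
  shows "card (f \<inter> g) \<le> 2"
proof -
  have "f \<inter> g \<subset> f"
    using assms card_subset_eq[OF card_3_finite[OF assms(2)], of f] by auto
  then have "card (f \<inter> g) < card f"
    using psubset_card_mono[OF card_3_finite[OF assms(1)]] by blast
  then show ?thesis
    using assms(1) by simp
qed

lemma adjacent_facets_if_common_pair:
  assumes "card f = 3" "card g = 3" "{v, a} \<subseteq> f \<inter> g" "v \<noteq> a" "f \<in> F" "g \<in> F" "f \<noteq> g"
  shows "adjacent_facets F f g"
proof -
  have "card {v, a} \<le> card (f \<inter> g)"
    using assms(3) card_3_finite[OF assms(1)] by (intro card_mono) auto
  then have "card (f \<inter> g) = 2"
    using card_Int_triangles[OF assms(1,2,7)] assms(4) by simp
  then show ?thesis
    unfolding adjacent_facets_def using assms(5-7) by blast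
qed

lemma adjacent_facets_sym: "adjacent_facets F f g \<Longrightarrow> adjacent_facets F g f"
  unfolding adjacent_facets_def by (auto simp: Int_commute)

lemma link_rtrancl_imp_adjacent_facets_rtrancl:
  assumes M: "simplicial_2_manifold F" and ac: "(a, c) \<in> (link_rel F v)\<^sup>*"
    and g: "g \<in> F" "{v, c} \<subseteq> g" "c \<noteq> v"
    and f: "f \<in> F" "{v, a} \<subseteq> f" "a \<noteq> v"
  shows "(f, g) \<in> {(x, y). adjacent_facets F x y}\<^sup>*"
  using ac f
proof (induction arbitrary: f rule: converse_rtrancl_induct)
  case base
  then show ?case
    using adjacent_facets_if_common_pair[of f g v c F] simplicial_2_manifoldD(3)[OF M] g
    by (cases "f = g") auto
next
  case (step a a')
  then have t: "{v, a, a'} \<in> F" "a' \<noteq> v"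
    unfolding link_rel_def by auto
  then have "({v, a, a'}, g) \<in> {(x, y). adjacent_facets F x y}\<^sup>*"
    using step.IH by blast
  moreover have "f = {v, a, a'} \<or> adjacent_facets F f {v, a, a'}"
    using adjacent_facets_if_common_pair[of f "{v, a, a'}" v a F] simplicial_2_manifoldD(3)[OF M]
      t step.prems
    by auto
  ultimately show ?case
    by (auto intro: converse_rtrancl_into_rtrancl)
qed

lemma adjacent_facets_connected:
  assumes M: "simplicial_2_manifold F" and "connected_complex F"
  shows "\<forall>f\<in>F. \<forall>g\<in>F. (f, g) \<in> {(x, y). adjacent_facets F x y}\<^sup>*"
proof -
  let ?A = "{(x, y). adjacent_facets F x y}"
  let ?R = "{(f, g). f \<in> F \<and> g \<in> F \<and> f \<inter> g \<noteq> {}}"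
  have other: "\<exists>a\<in>f. a \<noteq> v" if "f \<in> F" for f v
  proof (rule ccontr)
    assume "\<not> (\<exists>a\<in>f. a \<noteq> v)"
    then have "card f \<le> card {v}"
      by (intro card_mono) auto
    then show False
      using simplicial_2_manifoldD(3)[OF M that] by simp
  qed
  have "(f, g) \<in> ?A\<^sup>*" if fg: "f \<in> F" "g \<in> F" "v \<in> f" "v \<in> g" for f g v
  proof -
    obtain a c where "a \<in> f" "a \<noteq> v" "c \<in> g" "c \<noteq> v"
      using other[OF fg(1)] other[OF fg(2)] by blast
    moreover have "v \<in> vertices F" "a \<in> link_vertices F v" "c \<in> link_vertices F v"
      unfolding vertices_def link_vertices_def using fg calculation by blast+
    ultimately show ?thesis
      using link_rtrancl_imp_adjacent_facets_rtrancl[OF M simplicial_2_manifoldD(5)[OF M]] fg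
      by blast
  qed
  then have "?R \<subseteq> ?A\<^sup>*"
    by blast
  then have "?R\<^sup>* \<subseteq> ?A\<^sup>*"
    by (rule rtrancl_subset_rtrancl)
  then show ?thesis
    using assms(2) unfolding connected_complex_def by blast
qed

lemma card_adjacent_facets:
  assumes M: "simplicial_2_manifold F" and f: "f \<in> F"
  shows "card (nbrs (adjacent_facets F) F f) \<le> 3"
proof -
  let ?N = "nbrs (adjacent_facets F) F f"
  have fin: "finite f"
    using card_3_finite simplicial_2_manifoldD(3)[OF M f] by blast
  have "inj_on (\<lambda>g. f \<inter> g) ?N"
  proof (rule inj_onI, rule ccontr)
    fix g g' assume g: "g \<in> ?N" "g' \<in> ?N" and eq: "f \<inter> g = f \<inter> g'" and "g \<noteq> g'"
    then have "card (f \<inter> g) = 2" "{f, g, g'} \<subseteq> F" "f \<noteq> g" "f \<noteq> g'"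
      unfolding nbrs_def adjacent_facets_def by auto
    then show False
      using edge_in_at_most_two_facets[OF M, of "f \<inter> g" f g g'] eq \<open>g \<noteq> g'\<close> by blast
  qed
  then have "card ?N = card ((\<lambda>g. f \<inter> g) ` ?N)"
    by (rule card_image[symmetric])
  also have "\<dots> \<le> card {e. e \<subseteq> f \<and> card e = 2}"
    using fin by (intro card_mono) (auto simp: nbrs_def adjacent_facets_def)
  also have "\<dots> = 3"
    using card_2_subsets_triangle simplicial_2_manifoldD(3)[OF M f] by blast
  finally show ?thesis .
qed

lemma checkered_if_checkered_graph:
  assumes chk: "checkered_graph (adjacent_facets F) F black"
  shows "checkered F"
  unfolding checkered_def
proof (intro exI conjI allI impI ballI)
  fix f g assume "adjacent_facets F f g"
  moreover from this have "f \<in> F" "g \<in> F"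
    unfolding adjacent_facets_def by blast+
  ultimately show "black f \<noteq> black g"
    using chk unfolding checkered_graph_def by blast
next
  fix f assume "f \<in> F" "\<not> black f"
  then have "card (nbrs (adjacent_facets F) F f) = 3"
    using chk unfolding checkered_graph_def by blast
  moreover have "nbrs (adjacent_facets F) F f = {g. adjacent_facets F f g}"
    unfolding nbrs_def adjacent_facets_def by blast
  ultimately show "card {g. adjacent_facets F f g} = 3"
    by simp
qed

lemma dual_graph_short_path_partition_or_checkered_tree:
  assumes M: "simplicial_2_manifold F" and conn: "connected_complex F"
  shows "block_partition (short_path (adjacent_facets F)) F \<or>
    (\<exists>r par h black. rooted_tree F r par h \<and>
       (\<forall>f\<in>F. \<forall>g\<in>F. adjacent_facets F f g \<longleftrightarrow> tree_adj r par f g) \<and>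
       checkered_graph (adjacent_facets F) F black)"
proof (rule short_path_partition_or_checkered_tree)
  show "finite F" "F \<noteq> {}"
    using simplicial_2_manifoldD(1,2)[OF M] .
  show "\<forall>f\<in>F. \<forall>g\<in>F. (f, g) \<in> {(a, b). adjacent_facets F a b}\<^sup>*"
    using adjacent_facets_connected[OF M conn] .
  show "\<forall>f\<in>F. card (nbrs (adjacent_facets F) F f) \<le> 3"
    using card_adjacent_facets[OF M] by blast
  show "adjacent_facets F g f" if "adjacent_facets F f g" for f g
    using adjacent_facets_sym[OF that] .
qed (simp_all add: adjacent_facets_def)

lemma facet_cycle_at_if_short_path:
  assumes M: "simplicial_2_manifold F" and "short_path (adjacent_facets F) B"
  shows "\<exists>z. facet_cycle_at B z"
  using assms(2) unfolding short_path_def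
proof (elim disjE exE conjE)
  fix a b assume "B = {a, b}" "a \<noteq> b" "adjacent_facets F a b"
  then show ?thesis
    using facet_cycle_at_pair[of a b] unfolding adjacent_facets_def by simp
next
  fix a b c assume B: "B = {a, b, c}" "distinct [a, b, c]" "adjacent_facets F b a"
    "adjacent_facets F b c"
  then have ab: "card (a \<inter> b) = 2" "card (b \<inter> c) = 2" "{a, b, c} \<subseteq> F"
    unfolding adjacent_facets_def by (auto simp: Int_commute)
  have "a \<inter> b \<noteq> b \<inter> c"
  proof
    assume "a \<inter> b = b \<inter> c"
    then have "a = b \<or> b = c \<or> a = c"
      using edge_in_at_most_two_facets[OF M ab(1,3)] by blast
    then show False
      using B(2) by auto
  qed
  moreover have "card b = 3"
    using simplicial_2_manifoldD(3)[OF M] ab(3) by simp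
  ultimately show ?thesis
    using facet_cycle_at_path3[OF B(2) ab(1,2)] B(1) by simp
qed

lemma has_facet_cycle_if_short_path_partition:
  assumes M: "simplicial_2_manifold F" and conn: "connected_complex F"
    and "block_partition (short_path (adjacent_facets F)) F"
  shows "has_facet_cycle F"
proof -
  have "block_partition (\<lambda>S. \<exists>z. facet_cycle_at S z) F"
    using assms(3) by (rule block_partition_mono) (rule facet_cycle_at_if_short_path[OF M])
  then have "\<exists>z. facet_cycle_at F z"
  proof (rule block_partition_merge)
    show "finite F" "F \<noteq> {}"
      using simplicial_2_manifoldD(1,2)[OF M] .
    show "\<forall>x\<in>F. \<forall>y\<in>F. (x, y) \<in> {(a, b). adjacent_facets F a b}\<^sup>*"
      using adjacent_facets_connected[OF M conn] .
    show "b \<in> F" if "adjacent_facets F a b" for a b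
      using that unfolding adjacent_facets_def by blast
    fix S T a b
    assume "\<exists>z. facet_cycle_at S z" "\<exists>z. facet_cycle_at T z" and ST: "S \<inter> T = {}" "a \<in> S" "b \<in> T"
      and ab: "adjacent_facets F a b"
    then obtain z1 z2 where "facet_cycle_at S z1" "facet_cycle_at T z2"
      by blast
    moreover have "card a = 3" "card b = 3" "card (a \<inter> b) = 2"
      using ab simplicial_2_manifoldD(3)[OF M] unfolding adjacent_facets_def by auto
    ultimately show "\<exists>z. facet_cycle_at (S \<union> T) z"
      by (rule facet_cycle_at_Un_adjacent[OF _ _ ST])
  qed
  then obtain z where "facet_cycle_at F z"
    by blast
  then show ?thesis
    by (rule has_facet_cycle_if_facet_cycle_at)
qed

section \<open>Complexes whose dual graph is a tree\<close>

definition interior_edges :: "'v set set \<Rightarrow> 'v set set" where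
  "interior_edges F = {e \<in> edges F. card {f\<in>F. e \<subseteq> f} = 2}"

lemma sum_card_filter_swap:
  assumes "finite A" "finite B"
  shows "(\<Sum>x\<in>A. card {y\<in>B. R x y}) = (\<Sum>y\<in>B. card {x\<in>A. R x y})"
  unfolding card_eq_sum[of "{y\<in>B. R _ y}"] card_eq_sum[of "{x\<in>A. R x _}"]
  by (rule sum.swap_restrict[OF assms])

lemma finite_Union_facets: "simplicial_2_manifold F \<Longrightarrow> finite (\<Union>F)"
  using simplicial_2_manifoldD(1,3) card_3_finite by blast

lemma finite_vertices: "simplicial_2_manifold F \<Longrightarrow> finite (vertices F)"
  unfolding vertices_def by (rule finite_Union_facets)

lemma finite_edges:
  assumes "simplicial_2_manifold F"
  shows "finite (edges F)"
proof -
  have "edges F \<subseteq> Pow (\<Union>F)"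
    unfolding edges_def by blast
  then show ?thesis
    using finite_Union_facets[OF assms] finite_subset by blast
qed

lemma finite_link_vertices:
  assumes "simplicial_2_manifold F"
  shows "finite (link_vertices F v)"
  using finite_Union_facets[OF assms]
  by (rule finite_subset[rotated]) (auto simp: link_vertices_def)

lemma sum_card_facets_of_edges:
  assumes M: "simplicial_2_manifold F"
  shows "(\<Sum>e\<in>edges F. card {f\<in>F. e \<subseteq> f}) = 3 * card F"
proof -
  have "(\<Sum>e\<in>edges F. card {f\<in>F. e \<subseteq> f}) = (\<Sum>f\<in>F. card {e\<in>edges F. e \<subseteq> f})"
    by (rule sum_card_filter_swap[OF finite_edges[OF M] simplicial_2_manifoldD(1)[OF M]])
  also have "\<dots> = (\<Sum>f\<in>F. 3)"
  proof (rule sum.cong[OF refl])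
    fix f assume "f \<in> F"
    then have "{e\<in>edges F. e \<subseteq> f} = {e. e \<subseteq> f \<and> card e = 2}"
      unfolding edges_def by blast
    then show "card {e\<in>edges F. e \<subseteq> f} = 3"
      using card_2_subsets_triangle simplicial_2_manifoldD(3)[OF M \<open>f \<in> F\<close>] by simp
  qed
  finally show ?thesis
    by simp
qed

lemma sum_card_facets_of_edges_interior:
  assumes M: "simplicial_2_manifold F"
  shows "(\<Sum>e\<in>edges F. card {f\<in>F. e \<subseteq> f}) = card (edges F) + card (interior_edges F)"
proof -
  have "card {f\<in>F. e \<subseteq> f} = 1 + (if e \<in> interior_edges F then 1 else 0)" if e: "e \<in> edges F" for e
  proof -
    obtain f where "f \<in> F" "e \<subseteq> f"
      using e unfolding edges_def by blast
    then have "card {f\<in>F. e \<subseteq> f} \<noteq> 0"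
      using simplicial_2_manifoldD(1)[OF M] by auto
    then show ?thesis
      using simplicial_2_manifoldD(4)[OF M e] e unfolding interior_edges_def by auto
  qed
  then have "(\<Sum>e\<in>edges F. card {f\<in>F. e \<subseteq> f}) =
      (\<Sum>e\<in>edges F. 1 + (if e \<in> interior_edges F then 1 else 0))"
    by (intro sum.cong) auto
  also have "\<dots> = (\<Sum>e\<in>edges F. 1) + (\<Sum>e\<in>edges F. if e \<in> interior_edges F then 1 else 0)"
    by (simp only: sum.distrib)
  also have "\<dots> = card (edges F) + card (interior_edges F)"
    using sum.inter_filter[OF finite_edges[OF M], of "\<lambda>_. 1::nat" "\<lambda>e. e \<in> interior_edges F"]
    by (simp add: interior_edges_def)
  finally show ?thesis .
qed

lemma sum_card_facets_of_vertices:
  assumes M: "simplicial_2_manifold F"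
  shows "(\<Sum>v\<in>vertices F. card {f\<in>F. v \<in> f}) = 3 * card F"
proof -
  have "(\<Sum>v\<in>vertices F. card {f\<in>F. v \<in> f}) = (\<Sum>f\<in>F. card {v\<in>vertices F. v \<in> f})"
    by (rule sum_card_filter_swap[OF finite_vertices[OF M] simplicial_2_manifoldD(1)[OF M]])
  also have "\<dots> = (\<Sum>f\<in>F. 3)"
  proof (rule sum.cong[OF refl])
    fix f assume "f \<in> F"
    then have "{v\<in>vertices F. v \<in> f} = f"
      unfolding vertices_def by blast
    then show "card {v\<in>vertices F. v \<in> f} = 3"
      using simplicial_2_manifoldD(3)[OF M \<open>f \<in> F\<close>] by simp
  qed
  finally show ?thesis
    by simp
qed

lemma card_link_vertices: "card (link_vertices F v) = card {e\<in>edges F. v \<in> e}"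
proof -
  have inj: "inj_on (\<lambda>a. {v, a}) (link_vertices F v)"
    unfolding inj_on_def link_vertices_def by (metis doubleton_eq_iff)
  have "(\<lambda>a. {v, a}) ` link_vertices F v = {e\<in>edges F. v \<in> e}"
  proof (intro equalityI subsetI)
    fix e assume "e \<in> (\<lambda>a. {v, a}) ` link_vertices F v"
    then obtain a f where "e = {v, a}" "a \<noteq> v" "f \<in> F" "{v, a} \<subseteq> f"
      unfolding link_vertices_def by blast
    then show "e \<in> {e\<in>edges F. v \<in> e}"
      using edge_in_edges[of "{v, a}" f F] by auto
  next
    fix e assume e: "e \<in> {e\<in>edges F. v \<in> e}"
    then obtain f where f: "card e = 2" "f \<in> F" "e \<subseteq> f" "v \<in> e"
      unfolding edges_def by blast
    then have "card (e - {v}) = 1"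
      by simp
    then obtain a where "e - {v} = {a}"
      by (rule card_1_singletonE)
    then have "e = {v, a}" "a \<in> link_vertices F v"
      using f unfolding link_vertices_def by auto
    then show "e \<in> (\<lambda>a. {v, a}) ` link_vertices F v"
      by blast
  qed
  then show ?thesis
    using card_image[OF inj] by simp
qed

lemma sum_card_link_vertices:
  assumes M: "simplicial_2_manifold F"
  shows "(\<Sum>v\<in>vertices F. card (link_vertices F v)) = 2 * card (edges F)"
proof -
  have "(\<Sum>v\<in>vertices F. card (link_vertices F v)) = (\<Sum>v\<in>vertices F. card {e\<in>edges F. v \<in> e})"
    by (simp add: card_link_vertices)
  also have "\<dots> = (\<Sum>e\<in>edges F. card {v\<in>vertices F. v \<in> e})"
    by (rule sum_card_filter_swap[OF finite_vertices[OF M] finite_edges[OF M]])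
  also have "\<dots> = (\<Sum>e\<in>edges F. 2)"
  proof (rule sum.cong[OF refl])
    fix e assume "e \<in> edges F"
    then have "{v\<in>vertices F. v \<in> e} = e" "card e = 2"
      unfolding vertices_def edges_def by auto
    then show "card {v\<in>vertices F. v \<in> e} = 2"
      by simp
  qed
  finally show ?thesis
    by simp
qed

text \<open>A spanning tree of the (connected) link of \<open>v\<close> embeds its non-root vertices into the
  facets at \<open>v\<close>, via \<open>x \<mapsto> {v, parent x, x}\<close>.\<close>

lemma card_link_vertices_le:
  assumes M: "simplicial_2_manifold F" and v: "v \<in> vertices F"
  shows "card (link_vertices F v) \<le> card {f\<in>F. v \<in> f} + 1"
proof -
  let ?L = "link_vertices F v" and ?T = "{f\<in>F. v \<in> f}"
  have finL: "finite ?L"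
    using finite_link_vertices[OF M] .
  obtain a0 where a0: "a0 \<in> ?L"
  proof -
    obtain f where "f \<in> F" "v \<in> f"
      using v unfolding vertices_def by blast
    moreover have "\<not> f \<subseteq> {v}"
      using card_mono[of "{v}" f] simplicial_2_manifoldD(3)[OF M \<open>f \<in> F\<close>] by auto
    ultimately show ?thesis
      using that unfolding link_vertices_def by blast
  qed
  have "link_rel F v \<subseteq> ?L \<times> ?L"
    unfolding link_rel_def link_vertices_def by blast
  moreover have "\<forall>x\<in>?L. (a0, x) \<in> (link_rel F v)\<^sup>*"
    using simplicial_2_manifoldD(5)[OF M v a0] by blast
  ultimately obtain par h where T: "rooted_tree ?L a0 par h"
    and edges: "\<forall>x\<in>?L - {a0}. (par x, x) \<in> link_rel F v"
    by (rule spanning_rooted_tree[OF finL a0])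
  let ?psi = "\<lambda>x. {v, par x, x}"
  have img: "?psi ` (?L - {a0}) \<subseteq> ?T"
    using edges unfolding link_rel_def by auto
  have inj: "inj_on ?psi (?L - {a0})"
  proof (rule inj_onI, rule ccontr)
    fix x y assume x: "x \<in> ?L - {a0}" and y: "y \<in> ?L - {a0}" and eq: "?psi x = ?psi y" and "x \<noteq> y"
    moreover have "x \<noteq> v" "y \<noteq> v"
      using x y unfolding link_vertices_def by blast+
    moreover have "x \<in> ?psi y" "y \<in> ?psi x"
      using eq by auto
    ultimately have "par x = y" "par y = x"
      by auto
    then show False
      using rooted_treeD(2)[OF T, of x] rooted_treeD(2)[OF T, of y] x y by auto
  qed
  have "card (?L - {a0}) \<le> card ?T"
    using card_inj_on_le[OF inj img] simplicial_2_manifoldD(1)[OF M] by simp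
  then show ?thesis
    using finL a0 by simp
qed

text \<open>Without a boundary edge at \<open>v\<close>, every link vertex lies in two facets at \<open>v\<close>, and double
  counting gives as many link vertices as facets at \<open>v\<close>.\<close>

lemma boundary_edge_if_card_link_vertices:
  assumes M: "simplicial_2_manifold F"
    and eq: "card (link_vertices F v) = card {f\<in>F. v \<in> f} + 1"
  shows "\<exists>e. boundary_edge F e \<and> v \<in> e"
proof (rule ccontr)
  assume no_boundary: "\<not> ?thesis"
  let ?L = "link_vertices F v" and ?T = "{f\<in>F. v \<in> f}"
  have finL: "finite ?L"
    using finite_link_vertices[OF M] .
  have finT: "finite ?T"
    using simplicial_2_manifoldD(1)[OF M] by simp
  have "card {f\<in>?T. a \<in> f} = 2" if a: "a \<in> ?L" for a
  proof -
    obtain f where f: "f \<in> F" "v \<in> f" "a \<in> f" "a \<noteq> v"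
      using a unfolding link_vertices_def by blast
    then have e: "{v, a} \<in> edges F"
      by (intro edge_in_edges[of _ f]) auto
    have "{f\<in>?T. a \<in> f} = {f\<in>F. {v, a} \<subseteq> f}"
      by blast
    moreover have "{f\<in>F. {v, a} \<subseteq> f} \<noteq> {}"
      using f by blast
    then have "card {f\<in>F. {v, a} \<subseteq> f} \<noteq> 0"
      using simplicial_2_manifoldD(1)[OF M] by simp
    ultimately show ?thesis
      using simplicial_2_manifoldD(4)[OF M e] no_boundary e unfolding boundary_edge_def by fastforce
  qed
  then have "(\<Sum>a\<in>?L. card {f\<in>?T. a \<in> f}) = 2 * card ?L"
    by simp
  moreover have "card {a\<in>?L. a \<in> f} = 2" if "f \<in> ?T" for f
  proof -
    have "{a\<in>?L. a \<in> f} = f - {v}"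
      using that unfolding link_vertices_def by blast
    then show ?thesis
      using that simplicial_2_manifoldD(3)[OF M] by simp
  qed
  then have "(\<Sum>f\<in>?T. card {a\<in>?L. a \<in> f}) = 2 * card ?T"
    by simp
  ultimately show False
    using sum_card_filter_swap[OF finL finT, of "\<lambda>a f. a \<in> f"] eq by simp
qed

lemma interior_edgesI:
  assumes M: "simplicial_2_manifold F" and "e \<in> edges F" "{f, g} \<subseteq> F" "e \<subseteq> f" "e \<subseteq> g" "f \<noteq> g"
  shows "e \<in> interior_edges F"
proof -
  have "card {f, g} \<le> card {h\<in>F. e \<subseteq> h}"
    using assms(3-5) simplicial_2_manifoldD(1)[OF M] by (intro card_mono) auto
  then show ?thesis
    using simplicial_2_manifoldD(4)[OF M assms(2)] assms(2,6) unfolding interior_edges_def by simp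
qed

lemma interior_edgesE:
  assumes M: "simplicial_2_manifold F" and "e \<in> interior_edges F"
  obtains a b where "adjacent_facets F a b" "e = a \<inter> b"
proof -
  have e: "e \<in> edges F" "card {f\<in>F. e \<subseteq> f} = 2"
    using assms(2) unfolding interior_edges_def by auto
  then obtain a b where ab: "{f\<in>F. e \<subseteq> f} = {a, b}" "a \<noteq> b"
    by (meson card_2_iff)
  then have abF: "a \<in> F" "b \<in> F" "e \<subseteq> a \<inter> b"
    by blast+
  have card_ab: "card a = 3" "card b = 3"
    using simplicial_2_manifoldD(3)[OF M] abF(1,2) by auto
  have fin: "finite (a \<inter> b)"
    using card_3_finite[OF card_ab(1)] by blast
  have "card e = 2"
    using e(1) unfolding edges_def by blast
  moreover have "card e \<le> card (a \<inter> b)"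
    using card_mono[OF fin abF(3)] .
  ultimately have "card (a \<inter> b) = 2"
    using card_Int_triangles[OF card_ab ab(2)] by simp
  then have "e = a \<inter> b" "adjacent_facets F a b"
    using card_subset_eq[OF fin abF(3)] \<open>card e = 2\<close> abF ab(2) unfolding adjacent_facets_def by auto
  then show ?thesis
    using that by blast
qed

lemma dual_tree_par:
  assumes T: "rooted_tree F r par h"
    and adj: "\<forall>f\<in>F. \<forall>g\<in>F. adjacent_facets F f g \<longleftrightarrow> tree_adj r par f g"
    and "x \<in> F" "x \<noteq> r"
  shows "par x \<in> F" "adjacent_facets F x (par x)" "x \<noteq> par x" "card (x \<inter> par x) = 2"
    "x \<inter> par x \<in> edges F"
proof -
  show "par x \<in> F"
    using rooted_treeD(1)[OF T assms(3,4)] .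
  moreover have "tree_adj r par x (par x)"
    using tree_adj_par[OF assms(4)] .
  ultimately show "adjacent_facets F x (par x)"
    using adj assms(3) by blast
  then show "x \<noteq> par x" "card (x \<inter> par x) = 2"
    unfolding adjacent_facets_def by blast+
  then show "x \<inter> par x \<in> edges F"
    using edge_in_edges[of "x \<inter> par x" x F] assms(3) by blast
qed

lemma interior_edges_dual_tree:
  assumes M: "simplicial_2_manifold F" and T: "rooted_tree F r par h"
    and adj: "\<forall>f\<in>F. \<forall>g\<in>F. adjacent_facets F f g \<longleftrightarrow> tree_adj r par f g"
  shows "interior_edges F = (\<lambda>x. x \<inter> par x) ` (F - {r})"
proof (intro equalityI image_subsetI subsetI)
  fix e assume "e \<in> interior_edges F"
  then obtain a b where ab: "adjacent_facets F a b" "e = a \<inter> b"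
    by (rule interior_edgesE[OF M])
  then have "tree_adj r par a b"
    using adj unfolding adjacent_facets_def by blast
  then show "e \<in> (\<lambda>x. x \<inter> par x) ` (F - {r})"
    using ab unfolding adjacent_facets_def tree_adj_def by (auto simp: Int_commute)
next
  fix x assume "x \<in> F - {r}"
  then show "x \<inter> par x \<in> interior_edges F"
    using dual_tree_par[OF T adj, of x] by (intro interior_edgesI[OF M, of _ x "par x"]) auto
qed

lemma inj_on_parent_edge_dual_tree:
  assumes M: "simplicial_2_manifold F" and T: "rooted_tree F r par h"
    and adj: "\<forall>f\<in>F. \<forall>g\<in>F. adjacent_facets F f g \<longleftrightarrow> tree_adj r par f g"
  shows "inj_on (\<lambda>x. x \<inter> par x) (F - {r})"
proof (rule inj_onI, rule ccontr)
  fix x y assume x: "x \<in> F - {r}" and y: "y \<in> F - {r}" and eq: "x \<inter> par x = y \<inter> par y" and "x \<noteq> y"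
  note px = dual_tree_par[OF T adj, of x] and py = dual_tree_par[OF T adj, of y]
  have F: "{x, par x, y} \<subseteq> F" "{x, par x, par y} \<subseteq> F"
    using x y px(1) py(1) by blast+
  have "x \<inter> par x \<subseteq> y" "x \<inter> par x \<subseteq> par y"
    using eq by blast+
  then have "par x = y" "x = par y \<or> par x = par y"
    using edge_in_at_most_two_facets[OF M px(4) F(1)] edge_in_at_most_two_facets[OF M px(4) F(2)]
      \<open>x \<noteq> y\<close> px(3) x by blast+
  then have "par x = y" "par y = x"
    using py(3) y by auto
  then show False
    using rooted_treeD(2)[OF T, of x] rooted_treeD(2)[OF T, of y] x y by auto
qed

lemma card_interior_edges_dual_tree:
  assumes M: "simplicial_2_manifold F" and T: "rooted_tree F r par h"
    and adj: "\<forall>f\<in>F. \<forall>g\<in>F. adjacent_facets F f g \<longleftrightarrow> tree_adj r par f g"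
  shows "card (interior_edges F) = card F - 1"
  using card_image[OF inj_on_parent_edge_dual_tree[OF assms]] interior_edges_dual_tree[OF assms]
    rooted_tree_root[OF T] simplicial_2_manifoldD(1)[OF M] by simp

lemma card_edges_dual_tree:
  assumes M: "simplicial_2_manifold F" and T: "rooted_tree F r par h"
    and adj: "\<forall>f\<in>F. \<forall>g\<in>F. adjacent_facets F f g \<longleftrightarrow> tree_adj r par f g"
  shows "card (edges F) = 2 * card F + 1"
proof -
  have "card F \<noteq> 0"
    using simplicial_2_manifoldD(1,2)[OF M] by simp
  then show ?thesis
    using sum_card_facets_of_edges[OF M] sum_card_facets_of_edges_interior[OF M]
      card_interior_edges_dual_tree[OF assms] by simp
qed

text \<open>Each facet other than the root adds at most the one vertex it does not share with its parent.\<close>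

lemma card_Union_rooted_tree_le:
  assumes T: "rooted_tree X r par h" and card_X: "\<forall>x\<in>X. card x = 3"
    and card_par: "\<forall>x\<in>X - {r}. card (x \<inter> par x) = 2"
  shows "card (\<Union>X) \<le> card X + 2"
proof -
  let ?new = "\<lambda>y. y - par y"
  have "x \<subseteq> r \<union> (\<Union>y\<in>X - {r}. ?new y)" if "x \<in> X" for x
    using that
  proof (induction "h x" arbitrary: x rule: less_induct)
    case less
    show ?case
    proof (cases "x = r")
      case False
      then have "par x \<subseteq> r \<union> (\<Union>y\<in>X - {r}. ?new y)"
        using less rooted_treeD(1,2)[OF T] by blast
      then show ?thesis
        using less.prems False by blast
    qed simp
  qed
  then have "\<Union>X \<subseteq> r \<union> (\<Union>y\<in>X - {r}. ?new y)"
    by blast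
  moreover have fin: "finite r" "finite (X - {r})" "\<forall>y\<in>X - {r}. finite (?new y)"
    using rooted_tree_finite[OF T] rooted_tree_root[OF T] card_X card_3_finite by auto
  ultimately have "card (\<Union>X) \<le> card (r \<union> (\<Union>y\<in>X - {r}. ?new y))"
    by (intro card_mono) auto
  also have "\<dots> \<le> card r + card (\<Union>y\<in>X - {r}. ?new y)"
    by (rule card_Un_le)
  also have "\<dots> \<le> card r + (\<Sum>y\<in>X - {r}. card (?new y))"
    using card_UN_le[OF fin(2), of ?new] by simp
  also have "(\<Sum>y\<in>X - {r}. card (?new y)) = (\<Sum>y\<in>X - {r}. 1)"
  proof (rule sum.cong[OF refl])
    fix y assume y: "y \<in> X - {r}"
    have "finite y"
      using y card_X card_3_finite by blast
    then have "card (y - (y \<inter> par y)) = card y - card (y \<inter> par y)"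
      by (intro card_Diff_subset) auto
    moreover have "?new y = y - (y \<inter> par y)"
      by blast
    ultimately have "card (?new y) = card y - card (y \<inter> par y)"
      by simp
    then show "card (?new y) = 1"
      using y card_X card_par by simp
  qed
  moreover have "card X \<noteq> 0"
    using rooted_tree_root[OF T] rooted_tree_finite[OF T] by auto
  ultimately show ?thesis
    using card_X rooted_tree_root[OF T] by simp
qed

lemma card_vertices_dual_tree_le:
  assumes M: "simplicial_2_manifold F" and T: "rooted_tree F r par h"
    and adj: "\<forall>f\<in>F. \<forall>g\<in>F. adjacent_facets F f g \<longleftrightarrow> tree_adj r par f g"
  shows "card (vertices F) \<le> card F + 2"
proof -
  have "\<forall>x\<in>F - {r}. card (x \<inter> par x) = 2"
    using dual_tree_par(2)[OF T adj] unfolding adjacent_facets_def by blast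
  then show ?thesis
    using card_Union_rooted_tree_le[OF T] simplicial_2_manifoldD(3)[OF M] unfolding vertices_def
    by blast
qed

text \<open>Double counting incidences between vertices and edges resp. facets gives
  \<open>2 |E| \<le> 3 |F| + |V|\<close>, with equality only if every link has one vertex more than its star.\<close>

lemma dual_tree_polygon_triangulation:
  assumes M: "simplicial_2_manifold F" and conn: "connected_complex F"
    and T: "rooted_tree F r par h"
    and adj: "\<forall>f\<in>F. \<forall>g\<in>F. adjacent_facets F f g \<longleftrightarrow> tree_adj r par f g"
  shows "polygon_triangulation F"
proof -
  let ?link = "\<lambda>v. card (link_vertices F v)" and ?star = "\<lambda>v. card {f\<in>F. v \<in> f}"
  have le: "?link v \<le> ?star v + 1" if "v \<in> vertices F" for v
    using card_link_vertices_le[OF M that] .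
  have sum_link: "(\<Sum>v\<in>vertices F. ?link v) = 4 * card F + 2"
    using sum_card_link_vertices[OF M] card_edges_dual_tree[OF M T adj] by simp
  have sum_star1: "(\<Sum>v\<in>vertices F. ?star v + 1) = 3 * card F + card (vertices F)"
    unfolding sum.distrib using sum_card_facets_of_vertices[OF M] by simp
  have "(\<Sum>v\<in>vertices F. ?link v) \<le> (\<Sum>v\<in>vertices F. ?star v + 1)"
    by (rule sum_mono) (rule le)
  then have "card (vertices F) = card F + 2"
    using sum_link sum_star1 card_vertices_dual_tree_le[OF M T adj] by simp
  have "?link v = ?star v + 1" if "v \<in> vertices F" for v
  proof (rule ccontr)
    assume "?link v \<noteq> ?star v + 1"
    then have "?link v < ?star v + 1"
      using le[OF that] by simp
    then have "(\<Sum>v\<in>vertices F. ?link v) < (\<Sum>v\<in>vertices F. ?star v + 1)"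
      using le that by (intro sum_strict_mono_ex1[OF finite_vertices[OF M]]) blast+
    then show False
      using sum_link sum_star1 \<open>card (vertices F) = card F + 2\<close> by simp
  qed
  then have "\<forall>v\<in>vertices F. \<exists>e. boundary_edge F e \<and> v \<in> e"
    using boundary_edge_if_card_link_vertices[OF M] by blast
  moreover have "int (card (vertices F)) - int (card (edges F)) + int (card F) = 1"
    using \<open>card (vertices F) = card F + 2\<close> card_edges_dual_tree[OF M T adj] by simp
  ultimately show ?thesis
    unfolding polygon_triangulation_def using M conn by blast
qed

theorem mainTheorem9:
  fixes F :: "'v set set"
  assumes "simplicial_2_manifold F"
    and "connected_complex F"
    and "\<not> (polygon_triangulation F \<and> checkered F)"
  shows "has_facet_cycle F"
  using dual_graph_short_path_partition_or_checkered_tree[OF assms(1,2)]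
proof (elim disjE exE conjE)
  assume "block_partition (short_path (adjacent_facets F)) F"
  then show ?thesis
    by (rule has_facet_cycle_if_short_path_partition[OF assms(1,2)])
next
  fix r par h black
  assume "rooted_tree F r par h" "\<forall>f\<in>F. \<forall>g\<in>F. adjacent_facets F f g \<longleftrightarrow> tree_adj r par f g"
    and "checkered_graph (adjacent_facets F) F black"
  then have "polygon_triangulation F" "checkered F"
    using dual_tree_polygon_triangulation[OF assms(1,2)] checkered_if_checkered_graph by blast+
  with assms(3) show ?thesis
    by blast
qed

end
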